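(* Let $L>0$, $a\in\mathbb{R}$, $(\alpha,\beta)\in\mathbb{R}^2$, and let $u_1,u_2$ be $L^2$-normalized first and second eigenfunctions of $-\frac{d^2}{dx^2}+ax$ on $(-L/2,L/2)$ with Robin boundary conditions $u'(-L/2)=\alpha u(-L/2)$, $u'(L/2)=-\beta u(L/2)$. If $\int_{-L/2}^{L/2}x\,(u_2^2-u_1^2)\,dx=0$, then $u_2(-L/2)^2>u_1(-L/2)^2$ and $u_2(L/2)^2>u_1(L/2)^2$. *)

theory Defs
  imports "HOL-Analysis.Analysis"
begin

definition robin_eigenpair ::
  "real \<Rightarrow> real \<Rightarrow> real \<Rightarrow> real \<Rightarrow> real \<Rightarrow> (real \<Rightarrow> real) \<Rightarrow> bool" where
  "robin_eigenpair L a \<alpha> \<beta> lam u \<longleftrightarrow>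
     (\<exists>x\<in>{-L/2..L/2}. u x \<noteq> 0) \<and>
     (\<exists>u' u''.
        (\<forall>x\<in>{-L/2..L/2}.
            (u has_real_derivative u' x) (at x within {-L/2..L/2}) \<and>
            (u' has_real_derivative u'' x) (at x within {-L/2..L/2}) \<and>
            - u'' x + a * x * u x = lam * u x) \<and>
        u' (-L/2) = \<alpha> * u (-L/2) \<and>
        u' (L/2) = - \<beta> * u (L/2))"

definition robin_eigenvalue :: "real \<Rightarrow> real \<Rightarrow> real \<Rightarrow> real \<Rightarrow> real \<Rightarrow> bool" where
  "robin_eigenvalue L a \<alpha> \<beta> lam \<longleftrightarrow> (\<exists>u. robin_eigenpair L a \<alpha> \<beta> lam u)"

definition first_eigenfunction :: "real \<Rightarrow> real \<Rightarrow> real \<Rightarrow> real \<Rightarrow> (real \<Rightarrow> real) \<Rightarrow> bool" where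
  "first_eigenfunction L a \<alpha> \<beta> u \<longleftrightarrow>
     (\<exists>lam. robin_eigenpair L a \<alpha> \<beta> lam u \<and>
            (\<forall>\<mu>. robin_eigenvalue L a \<alpha> \<beta> \<mu> \<longrightarrow> lam \<le> \<mu>))"

definition second_eigenfunction :: "real \<Rightarrow> real \<Rightarrow> real \<Rightarrow> real \<Rightarrow> (real \<Rightarrow> real) \<Rightarrow> bool" where
  "second_eigenfunction L a \<alpha> \<beta> u \<longleftrightarrow>
     (\<exists>lam. robin_eigenpair L a \<alpha> \<beta> lam u \<and>
            (\<exists>\<mu>. robin_eigenvalue L a \<alpha> \<beta> \<mu> \<and> \<mu> < lam) \<and>
            (\<forall>\<mu> \<nu>. robin_eigenvalue L a \<alpha> \<beta> \<mu> \<and> \<mu> < lam \<and>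
                    robin_eigenvalue L a \<alpha> \<beta> \<nu> \<and> \<nu> < lam \<longrightarrow> \<mu> = \<nu>))"

definition L2_normalized :: "real \<Rightarrow> (real \<Rightarrow> real) \<Rightarrow> bool" where
  "L2_normalized L u \<longleftrightarrow> integral {-L/2..L/2} (\<lambda>x. (u x)\<^sup>2) = 1"

end

(*
  Every eigenfunction is a multiple of the shooting solution Y lam of y'' = (a x - lam) y with
  y(-L/2) = 1 and y'(-L/2) = alpha, built as a power series; the eigenvalues are the zeros of
  the boundary defect Y' lam (L/2) + beta Y lam (L/2), which depends continuously on lam by
  Gronwall estimates.  Sturm-type Wronskian arguments show that u1 has no zero and that u2 changes
  sign exactly once, at some z.  Hence the Wronskian of u1 and u2 has a fixed sign, u2/u1
  decreases, and phi = (u2/u1)^2 - 1 decreases on [-L/2, z], increases on [z, L/2] and is negative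
  at z.  Now u2^2 - u1^2 = u1^2 phi is orthogonal to 1 (normalisation) and to x (hypothesis), hence
  to x - x0 for every x0.  If phi were <= 0 at an endpoint, then for x0 a zero of phi (or the other
  endpoint) the product (x - x0)(u2^2 - u1^2) would have one sign and therefore vanish identically,
  which fails at z.
*)

theory Submission
  imports Defs
begin

section \<open>A power series solution of \<open>y'' = (c + a t) y\<close>\<close>

text \<open>Taylor coefficients at \<open>0\<close> of the solution of \<open>y'' = (c + a t) y\<close>, \<open>y 0 = 1\<close>, \<open>y' 0 = \<alpha>\<close>;
  the recurrence compares the coefficients of \<open>t ^ (n + 1)\<close> on both sides.\<close>

fun ode_coeff :: "real \<Rightarrow> real \<Rightarrow> real \<Rightarrow> nat \<Rightarrow> real" where
  "ode_coeff a \<alpha> c 0 = 1"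
| "ode_coeff a \<alpha> c (Suc 0) = \<alpha>"
| "ode_coeff a \<alpha> c (Suc (Suc 0)) = c / 2"
| "ode_coeff a \<alpha> c (Suc (Suc (Suc n))) =
     (c * ode_coeff a \<alpha> c (Suc n) + a * ode_coeff a \<alpha> c n) / (real (n + 2) * real (n + 3))"

lemma ode_coeff_geometric_bound:
  assumes R: "R > 0"
  shows "\<exists>B. \<forall>n. \<bar>ode_coeff a \<alpha> c n\<bar> * R ^ n \<le> B"
proof -
  let ?f = "ode_coeff a \<alpha> c"
  obtain N :: nat where N: "real N \<ge> \<bar>c\<bar> * R\<^sup>2 + \<bar>a\<bar> * R ^ 3"
    by (meson real_arch_simple)
  define B where "B = Max ((\<lambda>k. \<bar>?f k\<bar> * R ^ k) ` {..N + 2})"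
  have initial: "\<bar>?f k\<bar> * R ^ k \<le> B" if "k \<le> N + 2" for k
    unfolding B_def by (rule Max_ge) (use that in auto)
  have "B \<ge> 0"
    using initial[of 0] by simp
  have "\<bar>?f n\<bar> * R ^ n \<le> B" for n
  proof (induction n rule: less_induct)
    case (less n)
    show ?case
    proof (cases "n \<le> N + 2")
      case False
      define m where "m = n - 3"
      have n: "n = Suc (Suc (Suc m))" and "m \<ge> N"
        using False by (simp_all add: m_def)
      define d where "d = real (m + 2) * real (m + 3)"
      have "d \<ge> real m"
        by (simp add: d_def algebra_simps)
      then have d: "d > 0" "d \<ge> \<bar>c\<bar> * R\<^sup>2 + \<bar>a\<bar> * R ^ 3"
        using N \<open>m \<ge> N\<close> by (simp_all add: d_def)
      have "\<bar>?f n\<bar> * R ^ n = \<bar>c * ?f (Suc m) + a * ?f m\<bar> * R ^ n / d"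
        using n R by (simp add: d_def abs_divide abs_mult)
      also have "\<dots> \<le> (\<bar>c\<bar> * R\<^sup>2 * (\<bar>?f (Suc m)\<bar> * R ^ Suc m) + \<bar>a\<bar> * R ^ 3 * (\<bar>?f m\<bar> * R ^ m)) / d"
      proof -
        have "\<bar>c * ?f (Suc m) + a * ?f m\<bar> * R ^ n \<le> (\<bar>c\<bar> * \<bar>?f (Suc m)\<bar> + \<bar>a\<bar> * \<bar>?f m\<bar>) * R ^ n"
          using R by (intro mult_right_mono) (auto simp: abs_mult intro: order.trans[OF abs_triangle_ineq])
        also have "\<dots> = \<bar>c\<bar> * R\<^sup>2 * (\<bar>?f (Suc m)\<bar> * R ^ Suc m) + \<bar>a\<bar> * R ^ 3 * (\<bar>?f m\<bar> * R ^ m)"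
          by (simp add: n algebra_simps numeral_2_eq_2 numeral_3_eq_3)
        finally show ?thesis
          using d by (simp add: divide_right_mono)
      qed
      also have "\<dots> \<le> (\<bar>c\<bar> * R\<^sup>2 * B + \<bar>a\<bar> * R ^ 3 * B) / d"
        using less.IH[of "Suc m"] less.IH[of m] n
        by (intro divide_right_mono add_mono mult_left_mono) (auto simp: R less_imp_le d(1))
      also have "\<dots> = (\<bar>c\<bar> * R\<^sup>2 + \<bar>a\<bar> * R ^ 3) * B / d"
        by (simp add: algebra_simps)
      also have "\<dots> \<le> B"
        using mult_right_mono[OF d(2) \<open>B \<ge> 0\<close>] d(1) by (simp add: divide_le_eq mult.commute)
      finally show ?thesis .
    qed (rule initial)
  qed
  then show ?thesis by blast
qed

lemma summable_ode_coeff: "summable (\<lambda>n. ode_coeff a \<alpha> c n * t ^ n)"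
proof -
  obtain B where "\<And>n. \<bar>ode_coeff a \<alpha> c n\<bar> * (\<bar>t\<bar> + 1) ^ n \<le> B"
    using ode_coeff_geometric_bound[of "\<bar>t\<bar> + 1"] by force
  then have "summable (\<lambda>n. norm (ode_coeff a \<alpha> c n) * \<bar>t\<bar> ^ n)"
    using Abel_lemma[of "\<bar>t\<bar>" "\<bar>t\<bar> + 1" "ode_coeff a \<alpha> c" B] by auto
  then show ?thesis
    by (intro summable_norm_cancel[of "\<lambda>n. ode_coeff a \<alpha> c n * t ^ n"]) (simp add: abs_mult power_abs)
qed

definition ode_series :: "real \<Rightarrow> real \<Rightarrow> real \<Rightarrow> real \<Rightarrow> real" where
  "ode_series a \<alpha> c t = (\<Sum>n. ode_coeff a \<alpha> c n * t ^ n)"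

definition ode_series' :: "real \<Rightarrow> real \<Rightarrow> real \<Rightarrow> real \<Rightarrow> real" where
  "ode_series' a \<alpha> c t = (\<Sum>n. diffs (ode_coeff a \<alpha> c) n * t ^ n)"

lemma ode_series_0: "ode_series a \<alpha> c 0 = 1"
  using powser_zero[of "ode_coeff a \<alpha> c"] by (simp add: ode_series_def)

lemma ode_series'_0: "ode_series' a \<alpha> c 0 = \<alpha>"
  using powser_zero[of "diffs (ode_coeff a \<alpha> c)"] by (simp add: ode_series'_def diffs_def)

lemma ode_series_has_derivative: "(ode_series a \<alpha> c has_field_derivative ode_series' a \<alpha> c t) (at t)"
  unfolding ode_series_def[abs_def] ode_series'_def
  using termdiffs_strong_converges_everywhere[of "ode_coeff a \<alpha> c" t] summable_ode_coeff by blast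

lemma diffs_diffs_ode_coeff_sums:
  "(\<lambda>n. diffs (diffs (ode_coeff a \<alpha> c)) n * t ^ n) sums ((c + a * t) * ode_series a \<alpha> c t)"
proof -
  let ?f = "ode_coeff a \<alpha> c"
  have series: "(\<lambda>n. ?f n * t ^ n) sums ode_series a \<alpha> c t"
    unfolding ode_series_def by (rule summable_sums[OF summable_ode_coeff])
  define e where "e n = (if n = 0 then 0 else a * ?f (n - 1) * t ^ n)" for n
  have "(\<lambda>n. e (Suc n)) sums (a * t * ode_series a \<alpha> c t)"
    using sums_mult[OF series, of "a * t"] by (simp add: e_def mult_ac)
  then have "e sums (a * t * ode_series a \<alpha> c t)"
    by (subst (asm) sums_Suc_iff) (simp add: e_def)
  then have "(\<lambda>n. c * (?f n * t ^ n) + e n) sums ((c + a * t) * ode_series a \<alpha> c t)"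
    using sums_add[OF sums_mult[OF series, of c]] by (simp add: distrib_right)
  moreover have "c * (?f n * t ^ n) + e n = diffs (diffs ?f) n * t ^ n" for n
  proof (cases n)
    case 0
    have "diffs (diffs ?f) 0 = 2 * ?f (Suc (Suc 0))"
      by (simp add: diffs_def)
    then show ?thesis
      using 0 by (simp add: e_def)
  next
    case (Suc m)
    have "diffs (diffs ?f) n = real (Suc n) * real (Suc (Suc n)) * ?f (Suc (Suc n))"
      by (simp add: diffs_def)
    also have "\<dots> = c * ?f (Suc m) + a * ?f m"
    proof -
      have "real (Suc n) * real (Suc (Suc n)) = real (m + 2) * real (m + 3)"
        using Suc by simp
      moreover have "?f (Suc (Suc n)) = (c * ?f (Suc m) + a * ?f m) / (real (m + 2) * real (m + 3))"
        using Suc by simp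
      ultimately show ?thesis
        by simp
    qed
    finally show ?thesis
      using Suc unfolding e_def by (simp add: distrib_right)
  qed
  ultimately show ?thesis
    by simp
qed

lemma ode_series'_has_derivative:
  "(ode_series' a \<alpha> c has_field_derivative (c + a * t) * ode_series a \<alpha> c t) (at t)"
proof -
  have "summable (\<lambda>n. diffs (ode_coeff a \<alpha> c) n * t ^ n)" for t
    by (rule termdiff_converges_all) (rule summable_ode_coeff)
  then have "(ode_series' a \<alpha> c has_field_derivative (\<Sum>n. diffs (diffs (ode_coeff a \<alpha> c)) n * t ^ n)) (at t)"
    unfolding ode_series'_def[abs_def]
    using termdiffs_strong_converges_everywhere[of "diffs (ode_coeff a \<alpha> c)" t] by blast
  then show ?thesis
    by (simp add: sums_unique[OF diffs_diffs_ode_coeff_sums, symmetric])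
qed

section \<open>Calculus on a compact interval\<close>

lemma DERIV_within_Icc_nonneg_imp_le:
  fixes f f' :: "real \<Rightarrow> real"
  assumes der: "\<forall>x\<in>{l..h}. (f has_real_derivative f' x) (at x within {l..h})"
    and st: "l \<le> s" "s \<le> t" "t \<le> h"
    and nonneg: "\<And>x. s < x \<Longrightarrow> x < t \<Longrightarrow> f' x \<ge> 0"
  shows "f s \<le> f t"
proof (rule DERIV_nonneg_imp_increasing_open[OF st(2)])
  fix x assume x: "s < x" "x < t"
  then have "(f has_real_derivative f' x) (at x within {l..h})" "at x within {l..h} = at x"
    using der st by (auto intro!: at_within_Icc_at)
  then have "(f has_real_derivative f' x) (at x)"
    by simp
  then show "\<exists>y. (f has_real_derivative y) (at x) \<and> 0 \<le> y"
    using nonneg x by blast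
next
  have "continuous_on {l..h} f"
    using der by (intro DERIV_continuous_on[where D = f']) auto
  then show "continuous_on {s..t} f"
    by (rule continuous_on_subset) (use st in auto)
qed

lemma DERIV_within_Icc_pos_imp_less:
  fixes f f' :: "real \<Rightarrow> real"
  assumes der: "\<forall>x\<in>{l..h}. (f has_real_derivative f' x) (at x within {l..h})"
    and st: "l \<le> s" "s < t" "t \<le> h"
    and pos: "\<And>x. s < x \<Longrightarrow> x < t \<Longrightarrow> f' x > 0"
  shows "f s < f t"
proof (rule DERIV_pos_imp_increasing_open[OF st(2)])
  fix x assume x: "s < x" "x < t"
  then have "(f has_real_derivative f' x) (at x within {l..h})" "at x within {l..h} = at x"
    using der st by (auto intro!: at_within_Icc_at)
  then have "(f has_real_derivative f' x) (at x)"
    by simp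
  then show "\<exists>y. (f has_real_derivative y) (at x) \<and> 0 < y"
    using pos x by blast
next
  have "continuous_on {l..h} f"
    using der by (intro DERIV_continuous_on[where D = f']) auto
  then show "continuous_on {s..t} f"
    by (rule continuous_on_subset) (use st in auto)
qed

lemma gronwall_forward:
  fixes f f' :: "real \<Rightarrow> real"
  assumes der: "\<forall>x\<in>{l..h}. (f has_real_derivative f' x) (at x within {l..h})"
    and bound: "\<forall>x\<in>{l..h}. f' x \<le> K * f x + D" and K: "K > 0"
    and st: "l \<le> s" "s \<le> t" "t \<le> h"
  shows "f t + D / K \<le> (f s + D / K) * exp (K * (t - s))"
proof -
  define g where "g x = - (exp (- (K * x)) * (f x + D / K))" for x
  have g_der: "\<forall>x\<in>{l..h}. (g has_real_derivative exp (- (K * x)) * (K * f x + D - f' x)) (at x within {l..h})"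
  proof
    fix x assume "x \<in> {l..h}"
    then have "(f has_real_derivative f' x) (at x within {l..h})"
      using der by blast
    then show "(g has_real_derivative exp (- (K * x)) * (K * f x + D - f' x)) (at x within {l..h})"
      unfolding g_def[abs_def] using K
      by (auto intro!: derivative_eq_intros simp: field_simps)
  qed
  have "g s \<le> g t"
  proof (rule DERIV_within_Icc_nonneg_imp_le[OF g_der st])
    fix x assume "s < x" "x < t"
    then have "f' x \<le> K * f x + D"
      using bound st by auto
    then show "0 \<le> exp (- (K * x)) * (K * f x + D - f' x)"
      by simp
  qed
  have "f t + D / K = exp (K * t) * (exp (- (K * t)) * (f t + D / K))"
    by (simp add: exp_minus)
  also have "\<dots> \<le> exp (K * t) * (exp (- (K * s)) * (f s + D / K))"
    using \<open>g s \<le> g t\<close> by (intro mult_left_mono) (simp_all add: g_def)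
  also have "\<dots> = (f s + D / K) * exp (K * (t - s))"
    by (simp add: exp_diff exp_minus right_diff_distrib field_simps)
  finally show ?thesis .
qed

lemma gronwall_backward:
  fixes f f' :: "real \<Rightarrow> real"
  assumes der: "\<forall>x\<in>{l..h}. (f has_real_derivative f' x) (at x within {l..h})"
    and bound: "\<forall>x\<in>{l..h}. f' x \<ge> - (K * f x)"
    and st: "l \<le> s" "s \<le> t" "t \<le> h"
  shows "f s \<le> f t * exp (K * (t - s))"
proof -
  define g where "g x = exp (K * x) * f x" for x
  have g_der: "\<forall>x\<in>{l..h}. (g has_real_derivative exp (K * x) * (f' x + K * f x)) (at x within {l..h})"
  proof
    fix x assume "x \<in> {l..h}"
    then have "(f has_real_derivative f' x) (at x within {l..h})"
      using der by blast
    then show "(g has_real_derivative exp (K * x) * (f' x + K * f x)) (at x within {l..h})"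
      unfolding g_def[abs_def] by (auto intro!: derivative_eq_intros simp: field_simps)
  qed
  have "g s \<le> g t"
  proof (rule DERIV_within_Icc_nonneg_imp_le[OF g_der st])
    fix x assume "s < x" "x < t"
    then have "f' x \<ge> - (K * f x)"
      using bound st by auto
    then show "0 \<le> exp (K * x) * (f' x + K * f x)"
      by simp
  qed
  have "f s = exp (- (K * s)) * (exp (K * s) * f s)"
    by (simp add: exp_minus)
  also have "\<dots> \<le> exp (- (K * s)) * (exp (K * t) * f t)"
    using \<open>g s \<le> g t\<close> by (intro mult_left_mono) (simp_all add: g_def)
  also have "\<dots> = f t * exp (K * (t - s))"
    by (simp add: exp_diff exp_minus right_diff_distrib field_simps)
  finally show ?thesis .
qed

lemma gronwall_zero:
  fixes E E' :: "real \<Rightarrow> real"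
  assumes der: "\<forall>x\<in>{l..h}. (E has_real_derivative E' x) (at x within {l..h})"
    and bound: "\<forall>x\<in>{l..h}. \<bar>E' x\<bar> \<le> K * E x" and K: "K > 0"
    and z: "z \<in> {l..h}" "E z = 0" and x: "x \<in> {l..h}"
  shows "E x = 0"
proof -
  have "E x \<ge> 0"
    using bound x K by (smt (verit) zero_le_mult_iff)
  moreover have "E x \<le> 0"
  proof (cases "z \<le> x")
    case True
    have "E x + 0 / K \<le> (E z + 0 / K) * exp (K * (x - z))"
      using bound z x True by (intro gronwall_forward[OF der _ K]) (auto simp: abs_le_iff)
    then show ?thesis
      using z by simp
  next
    case False
    have "E x \<le> E z * exp (K * (z - x))"
      using bound z x False by (intro gronwall_backward[OF der]) (auto simp: abs_le_iff)
    then show ?thesis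
      using z by simp
  qed
  ultimately show ?thesis
    by simp
qed

lemma DERIV_nonpos_if_ge_on_left:
  fixes f :: "real \<Rightarrow> real"
  assumes der: "(f has_real_derivative D) (at z)" and "w < z"
    and ge: "\<And>x. w < x \<Longrightarrow> x < z \<Longrightarrow> f z \<le> f x"
  shows "D \<le> 0"
proof (rule ccontr)
  assume "\<not> D \<le> 0"
  then obtain d where "d > 0" and d: "\<And>h. 0 < h \<Longrightarrow> h < d \<Longrightarrow> f (z - h) < f z"
    using DERIV_pos_inc_left[OF der] by auto
  define h where "h = min (d / 2) ((z - w) / 2)"
  have "0 < h" "h < d" "h < z - w"
    using \<open>d > 0\<close> \<open>w < z\<close> by (auto simp: h_def min_def)
  then show False
    using d[of h] ge[of "z - h"] by auto
qed

lemma DERIV_neg_imp_smaller_right: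
  fixes f :: "real \<Rightarrow> real"
  assumes der: "(f has_real_derivative D) (at z)" and "D < 0" and "z < w"
  shows "\<exists>x. z < x \<and> x < w \<and> f x < f z"
proof -
  obtain d where "d > 0" and d: "\<And>h. 0 < h \<Longrightarrow> h < d \<Longrightarrow> f (z + h) < f z"
    using DERIV_neg_dec_right[OF der \<open>D < 0\<close>] by auto
  define h where "h = min (d / 2) ((w - z) / 2)"
  have "0 < h" "h < d" "h < w - z"
    using \<open>d > 0\<close> \<open>z < w\<close> by (auto simp: h_def min_def)
  then show ?thesis
    using d[of h] by (intro exI[of _ "z + h"]) auto
qed

lemma first_zero:
  fixes f :: "real \<Rightarrow> real"
  assumes cont: "continuous_on {l..h} f" and "f l > 0" and x: "x \<in> {l..h}" "f x \<le> 0"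
  shows "\<exists>z. l < z \<and> z \<le> x \<and> f z = 0 \<and> (\<forall>y. l \<le> y \<and> y < z \<longrightarrow> f y > 0)"
proof -
  define Z where "Z = {l..x} \<inter> f -` {..0}"
  have "continuous_on {l..x} f"
    by (rule continuous_on_subset[OF cont]) (use x in auto)
  then have "closed Z"
    unfolding Z_def by (rule continuous_closed_preimage) auto
  moreover have "x \<in> Z" "bdd_below Z"
    using x by (auto simp: Z_def)
  ultimately have "Inf Z \<in> Z"
    by (intro closed_contains_Inf) auto
  define z where "z = Inf Z"
  have "z \<in> Z"
    using \<open>Inf Z \<in> Z\<close> by (simp add: z_def)
  have below: "f y > 0" if "l \<le> y" "y < z" for y
  proof (rule ccontr)
    assume "\<not> f y > 0"
    then have "y \<in> Z"
      using that \<open>z \<in> Z\<close> by (auto simp: Z_def)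
    then have "z \<le> y"
      unfolding z_def using \<open>bdd_below Z\<close> by (rule cInf_lower)
    then show False
      using that by simp
  qed
  have "l < z"
    using \<open>z \<in> Z\<close> \<open>f l > 0\<close> by (auto simp: Z_def order_le_less)
  moreover have "f z = 0"
  proof (rule ccontr)
    assume "f z \<noteq> 0"
    then have "f z < 0"
      using \<open>z \<in> Z\<close> by (simp add: Z_def)
    moreover have "continuous_on {l..z} f"
      by (rule continuous_on_subset[OF cont]) (use \<open>z \<in> Z\<close> x in \<open>auto simp: Z_def\<close>)
    ultimately obtain w where "l \<le> w" "w \<le> z" "f w = 0"
      using IVT2'[of f z 0 l] \<open>f l > 0\<close> \<open>l < z\<close> by auto
    then show False
      using below[of w] \<open>f z \<noteq> 0\<close> by (cases "w = z") auto
  qed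
  moreover have "z \<le> x"
    using \<open>z \<in> Z\<close> by (simp add: Z_def)
  ultimately show ?thesis
    using below by blast
qed

section \<open>Functions orthogonal to the affine functions\<close>

lemma vanishing_moments_imp_zero:
  fixes D :: "real \<Rightarrow> real"
  assumes cont: "continuous_on {l..h} D" and "l < h"
    and moments: "integral {l..h} D = 0" "integral {l..h} (\<lambda>x. x * D x) = 0"
    and sign: "\<forall>x\<in>{l..h}. 0 \<le> (x - x0) * D x" and z: "z \<in> {l..h}"
  shows "(z - x0) * D z = 0"
proof -
  have cont': "continuous_on {l..h} (\<lambda>x. (x - x0) * D x)"
    by (intro continuous_intros cont)
  have "integral {l..h} (\<lambda>x. x * D x - x0 * D x) = integral {l..h} (\<lambda>x. x * D x) - integral {l..h} (\<lambda>x. x0 * D x)"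
    by (intro integral_diff integrable_continuous_interval continuous_intros cont)
  then have "integral {l..h} (\<lambda>x. (x - x0) * D x) = 0"
    using moments by (simp add: left_diff_distrib)
  then have "((\<lambda>x. (x - x0) * D x) has_integral 0) (cbox l h)"
    using integrable_integral[OF integrable_continuous_interval[OF cont']] by simp
  then show ?thesis
    using has_integral_0_cbox_imp_0[of l h "\<lambda>x. (x - x0) * D x" z] cont' sign z \<open>l < h\<close> by auto
qed

lemma vanishing_moments_left_end_pos:
  fixes D w \<phi> :: "real \<Rightarrow> real"
  assumes "l < z" "z < h"
    and cont: "continuous_on {l..h} D" "continuous_on {l..h} \<phi>"
    and moments: "integral {l..h} D = 0" "integral {l..h} (\<lambda>x. x * D x) = 0"
    and factor: "\<And>x. x \<in> {l..h} \<Longrightarrow> D x = w x * \<phi> x" "\<And>x. x \<in> {l..h} \<Longrightarrow> w x > 0"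
    and dec: "antimono_on {l..z} \<phi>" and inc: "mono_on {z..h} \<phi>" and "\<phi> z < 0"
  shows "\<phi> l > 0"
proof (rule ccontr)
  assume "\<not> \<phi> l > 0"
  then have left: "\<phi> x \<le> 0" if "l \<le> x" "x \<le> z" for x
    using monotone_onD[OF dec, of l x] that by auto
  obtain x0 where "z < x0" "x0 \<le> h"
    and below: "\<And>x. l \<le> x \<Longrightarrow> x \<le> x0 \<Longrightarrow> \<phi> x \<le> 0" and above: "\<And>x. x0 < x \<Longrightarrow> x \<le> h \<Longrightarrow> \<phi> x \<ge> 0"
  proof (cases "\<phi> h \<le> 0")
    case True
    have "\<phi> x \<le> 0" if "l \<le> x" "x \<le> h" for x
      using left monotone_onD[OF inc, of x h] that True by (cases "x \<le> z") auto
    then show ?thesis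
      using that[of h] \<open>z < h\<close> True by force
  next
    case False
    have "continuous_on {z..h} \<phi>"
      by (rule continuous_on_subset[OF cont(2)]) (use \<open>l < z\<close> in auto)
    then obtain x0 where x0: "z \<le> x0" "x0 \<le> h" "\<phi> x0 = 0"
      using IVT'[of \<phi> z 0 h] False \<open>\<phi> z < 0\<close> \<open>z < h\<close> by auto
    then have "z < x0"
      using \<open>\<phi> z < 0\<close> by (cases "z = x0") auto
    moreover have "\<phi> x \<le> 0" if "l \<le> x" "x \<le> x0" for x
      using left monotone_onD[OF inc, of x x0] that x0 by (cases "x \<le> z") auto
    moreover have "\<phi> x \<ge> 0" if "x0 < x" "x \<le> h" for x
      using monotone_onD[OF inc, of x0 x] that x0 by auto
    ultimately show ?thesis
      using that x0 by blast
  qed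
  have "0 \<le> (x - x0) * D x" if "x \<in> {l..h}" for x
  proof (cases "x \<le> x0")
    case True
    then show ?thesis
      using below[of x] factor[OF that] that by (simp add: mult_nonpos_nonpos mult_nonneg_nonpos less_imp_le)
  next
    case False
    then show ?thesis
      using above[of x] factor[OF that] that by simp
  qed
  then have "(z - x0) * D z = 0"
    using \<open>l < z\<close> \<open>z < h\<close> by (intro vanishing_moments_imp_zero[OF cont(1) _ moments]) auto
  moreover have "D z < 0"
    using factor[of z] \<open>\<phi> z < 0\<close> \<open>l < z\<close> \<open>z < h\<close> by (simp add: mult_pos_neg)
  ultimately show False
    using \<open>z < x0\<close> by simp
qed

lemma vanishing_moments_positive_ends:
  fixes D w \<phi> :: "real \<Rightarrow> real"
  assumes "l < z" "z < h"
    and cont: "continuous_on {l..h} D" "continuous_on {l..h} \<phi>"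
    and moments: "integral {l..h} D = 0" "integral {l..h} (\<lambda>x. x * D x) = 0"
    and factor: "\<And>x. x \<in> {l..h} \<Longrightarrow> D x = w x * \<phi> x" "\<And>x. x \<in> {l..h} \<Longrightarrow> w x > 0"
    and dec: "antimono_on {l..z} \<phi>" and inc: "mono_on {z..h} \<phi>" and neg: "\<phi> z < 0"
  shows "\<phi> l > 0 \<and> \<phi> h > 0"
proof
  show "\<phi> l > 0"
    by (rule vanishing_moments_left_end_pos) fact+
  have "continuous_on {-h..-l} (\<lambda>x. f (- x))" if "continuous_on {l..h} f" for f :: "real \<Rightarrow> real"
    by (rule continuous_on_compose2[OF that]) (auto intro!: continuous_intros)
  moreover have "integral {-h..-l} (\<lambda>x. x * D (- x)) = 0"
  proof -
    have "integral {-h..-l} (\<lambda>x. x * D (- x)) = integral {-h..-l} (\<lambda>x. - (- x * D (- x)))"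
      by simp
    also have "\<dots> = integral {l..h} (\<lambda>x. - (x * D x))"
      by (rule Henstock_Kurzweil_Integration.integral_reflect_real)
    also have "\<dots> = 0"
      using moments(2) by (simp only: integral_neg neg_equal_0_iff_equal)
    finally show ?thesis .
  qed
  moreover have "antimono_on {-h..-z} (\<lambda>x. \<phi> (- x))"
    using monotone_onD[OF inc] by (intro monotone_onI) auto
  moreover have "mono_on {-z..-l} (\<lambda>x. \<phi> (- x))"
    using monotone_onD[OF dec] by (intro monotone_onI) auto
  ultimately have "\<phi> (- (- h)) > 0"
    using assms(1,2) neg cont moments(1) factor
    by (intro vanishing_moments_left_end_pos[of "-h" "-z" "-l" "\<lambda>x. D (- x)" "\<lambda>x. \<phi> (- x)" "\<lambda>x. w (- x)"])
      auto
  then show "\<phi> h > 0"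
    by simp
qed


lemma square_of_antimono_through_zero:
  fixes \<rho> :: "real \<Rightarrow> real"
  assumes dec: "antimono_on {l..h} \<rho>" and z: "l \<le> z" "z \<le> h" "\<rho> z = 0"
  shows "antimono_on {l..z} (\<lambda>x. (\<rho> x)\<^sup>2)" "mono_on {z..h} (\<lambda>x. (\<rho> x)\<^sup>2)"
proof -
  have le: "\<rho> y \<le> \<rho> x" if "l \<le> x" "x \<le> y" "y \<le> h" for x y
    using monotone_onD[OF dec, of x y] that by auto
  show "antimono_on {l..z} (\<lambda>x. (\<rho> x)\<^sup>2)"
  proof (rule monotone_onI)
    fix x y assume "x \<in> {l..z}" "y \<in> {l..z}" "x \<le> y"
    then have "0 \<le> \<rho> y" "\<rho> y \<le> \<rho> x"
      using le[of y z] le[of x y] z by auto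
    then show "(\<rho> y)\<^sup>2 \<le> (\<rho> x)\<^sup>2"
      by (simp add: power_mono)
  qed
  show "mono_on {z..h} (\<lambda>x. (\<rho> x)\<^sup>2)"
  proof (rule monotone_onI)
    fix x y assume "x \<in> {z..h}" "y \<in> {z..h}" "x \<le> y"
    then have "\<rho> x \<le> 0" "\<rho> y \<le> \<rho> x"
      using le[of z x] le[of x y] z by auto
    then show "(\<rho> x)\<^sup>2 \<le> (\<rho> y)\<^sup>2"
      using power_mono[of "- \<rho> x" "- \<rho> y" 2] by simp
  qed
qed

section \<open>The shooting solution of the Robin problem\<close>

locale robin_problem =
  fixes L a \<alpha> \<beta> :: real
  assumes L_pos: "L > 0"
begin

definition lo :: real where "lo = - L / 2"
definition hi :: real where "hi = L / 2"
abbreviation I :: "real set" where "I \<equiv> {lo..hi}"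

lemma lo_less_hi: "lo < hi"
  using L_pos by (simp add: lo_def hi_def)

lemma lo_in_I: "lo \<in> I" and hi_in_I: "hi \<in> I"
  using lo_less_hi by auto

lemma hi_minus_lo: "hi - lo = L"
  by (simp add: lo_def hi_def)

lemma abs_le_L: "x \<in> I \<Longrightarrow> \<bar>x\<bar> \<le> L"
  using L_pos by (auto simp: lo_def hi_def)

lemma Icc_eq_I: "{- L / 2 .. L / 2} = I"
  by (simp add: lo_def hi_def)

definition ode_solution :: "real \<Rightarrow> (real \<Rightarrow> real) \<Rightarrow> (real \<Rightarrow> real) \<Rightarrow> bool" where
  "ode_solution lam y y' \<longleftrightarrow> (\<forall>x\<in>I. (y has_real_derivative y' x) (at x within I) \<and>
     (y' has_real_derivative (a * x - lam) * y x) (at x within I))"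

text \<open>\<open>Y lam\<close> solves \<open>y'' = (a x - lam) y\<close> with the Robin data of the left end,
  \<open>y lo = 1\<close> and \<open>y' lo = \<alpha>\<close>; the right Robin condition holds exactly when \<open>defect lam = 0\<close>.\<close>

definition Y :: "real \<Rightarrow> real \<Rightarrow> real" where
  "Y lam x = ode_series a \<alpha> (a * lo - lam) (x - lo)"

definition Y' :: "real \<Rightarrow> real \<Rightarrow> real" where
  "Y' lam x = ode_series' a \<alpha> (a * lo - lam) (x - lo)"

definition defect :: "real \<Rightarrow> real" where
  "defect lam = Y' lam hi + \<beta> * Y lam hi"

lemma Y_lo: "Y lam lo = 1"
  by (simp add: Y_def ode_series_0)

lemma Y'_lo: "Y' lam lo = \<alpha>"
  by (simp add: Y'_def ode_series'_0)

lemma Y_has_derivative: "(Y lam has_real_derivative Y' lam x) (at x within S)"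
proof -
  have "((\<lambda>x. ode_series a \<alpha> (a * lo - lam) (x - lo)) has_real_derivative
      ode_series' a \<alpha> (a * lo - lam) (x - lo) * 1) (at x within S)"
    by (rule DERIV_chain'[where g = "ode_series a \<alpha> (a * lo - lam)"])
      (auto intro!: derivative_eq_intros ode_series_has_derivative)
  then show ?thesis
    by (simp add: Y_def[abs_def] Y'_def)
qed

lemma Y'_has_derivative: "(Y' lam has_real_derivative (a * x - lam) * Y lam x) (at x within S)"
proof -
  have "((\<lambda>x. ode_series' a \<alpha> (a * lo - lam) (x - lo)) has_real_derivative
      (a * lo - lam + a * (x - lo)) * ode_series a \<alpha> (a * lo - lam) (x - lo) * 1) (at x within S)"
    by (rule DERIV_chain'[where g = "ode_series' a \<alpha> (a * lo - lam)"])
      (auto intro!: derivative_eq_intros ode_series'_has_derivative)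
  then show ?thesis
    by (simp add: Y_def Y'_def[abs_def] algebra_simps)
qed

lemma ode_solution_Y: "ode_solution lam (Y lam) (Y' lam)"
  unfolding ode_solution_def using Y_has_derivative Y'_has_derivative by blast

lemma continuous_on_Y: "continuous_on S (Y lam)"
  using Y_has_derivative by (intro DERIV_continuous_on) blast

lemma continuous_on_Y': "continuous_on S (Y' lam)"
  using Y'_has_derivative by (intro DERIV_continuous_on) blast

lemma energy_has_derivative:
  assumes "ode_solution lam y y'" "x \<in> I"
  shows "((\<lambda>x. (y x)\<^sup>2 + (y' x)\<^sup>2) has_real_derivative 2 * y x * y' x * (1 + (a * x - lam))) (at x within I)"
proof -
  have "(y has_real_derivative y' x) (at x within I)"
    "(y' has_real_derivative (a * x - lam) * y x) (at x within I)"
    using assms unfolding ode_solution_def by auto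
  then show ?thesis
    by (auto intro!: derivative_eq_intros simp: algebra_simps)
qed

lemma energy_derivative_bound:
  assumes "x \<in> I"
  shows "\<bar>2 * p * q * (1 + (a * x - lam))\<bar> \<le> (1 + \<bar>a\<bar> * L + \<bar>lam\<bar>) * (p\<^sup>2 + q\<^sup>2)"
proof -
  have "\<bar>a * x\<bar> \<le> \<bar>a\<bar> * L"
    using abs_le_L[OF assms] by (simp add: abs_mult mult_left_mono)
  then have "\<bar>1 + (a * x - lam)\<bar> \<le> 1 + \<bar>a\<bar> * L + \<bar>lam\<bar>"
    by linarith
  moreover have "\<bar>2 * p * q\<bar> \<le> p\<^sup>2 + q\<^sup>2"
    using sum_squares_bound[of "\<bar>p\<bar>" "\<bar>q\<bar>"] by (simp add: abs_mult)
  ultimately show ?thesis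
    by (simp add: abs_mult mult_mono mult.commute)
qed

lemma ode_solution_eq_0:
  assumes sol: "ode_solution lam y y'" and z: "z \<in> I" "y z = 0" "y' z = 0" and x: "x \<in> I"
  shows "y x = 0 \<and> y' x = 0"
proof -
  have "(y x)\<^sup>2 + (y' x)\<^sup>2 = 0"
  proof (rule gronwall_zero[OF _ _ _ z(1) _ x])
    show "\<forall>x\<in>I. ((\<lambda>x. (y x)\<^sup>2 + (y' x)\<^sup>2) has_real_derivative 2 * y x * y' x * (1 + (a * x - lam)))
      (at x within I)"
      using energy_has_derivative[OF sol] by blast
    show "\<forall>x\<in>I. \<bar>2 * y x * y' x * (1 + (a * x - lam))\<bar> \<le> (1 + \<bar>a\<bar> * L + \<bar>lam\<bar>) * ((y x)\<^sup>2 + (y' x)\<^sup>2)"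
      using energy_derivative_bound by blast
    show "1 + \<bar>a\<bar> * L + \<bar>lam\<bar> > 0"
      using L_pos by (simp add: add_pos_nonneg)
  qed (use z in simp)
  then show ?thesis
    by (simp add: add_nonneg_eq_0_iff)
qed

lemma ode_solution_diff:
  assumes "ode_solution lam y y'" "ode_solution lam w w'"
  shows "ode_solution lam (\<lambda>x. y x - c * w x) (\<lambda>x. y' x - c * w' x)"
  unfolding ode_solution_def
proof
  fix x assume "x \<in> I"
  then have "(y has_real_derivative y' x) (at x within I)"
    "(y' has_real_derivative (a * x - lam) * y x) (at x within I)"
    "(w has_real_derivative w' x) (at x within I)"
    "(w' has_real_derivative (a * x - lam) * w x) (at x within I)"
    using assms unfolding ode_solution_def by auto
  then show "((\<lambda>x. y x - c * w x) has_real_derivative y' x - c * w' x) (at x within I) \<and>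
      ((\<lambda>x. y' x - c * w' x) has_real_derivative (a * x - lam) * (y x - c * w x)) (at x within I)"
    by (auto intro!: derivative_eq_intros simp: algebra_simps)
qed

lemma Y'_nonzero_at_zero:
  assumes "z \<in> I" "Y lam z = 0"
  shows "Y' lam z \<noteq> 0"
  using ode_solution_eq_0[OF ode_solution_Y assms] lo_in_I Y_lo by fastforce

lemma eigenpair_eq_multiple_of_Y:
  assumes "robin_eigenpair L a \<alpha> \<beta> lam u"
  obtains c where "c \<noteq> 0" "\<And>x. x \<in> I \<Longrightarrow> u x = c * Y lam x" "defect lam = 0"
proof -
  obtain x0 u' u'' where x0: "x0 \<in> I" "u x0 \<noteq> 0"
    and D: "\<forall>x\<in>I. (u has_real_derivative u' x) (at x within I) \<and>
      (u' has_real_derivative u'' x) (at x within I) \<and> - u'' x + a * x * u x = lam * u x"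
    and left: "u' lo = \<alpha> * u lo" and right: "u' hi = - \<beta> * u hi"
    using assms unfolding robin_eigenpair_def Icc_eq_I by (auto simp: lo_def hi_def)
  have "u'' x = (a * x - lam) * u x" if "x \<in> I" for x
  proof -
    have "- u'' x + a * x * u x = lam * u x"
      using D that by blast
    then show ?thesis
      by (simp add: algebra_simps)
  qed
  then have "ode_solution lam u u'"
    using D by (simp add: ode_solution_def)
  define c where "c = u lo"
  have "ode_solution lam (\<lambda>x. u x - c * Y lam x) (\<lambda>x. u' x - c * Y' lam x)"
    using \<open>ode_solution lam u u'\<close> ode_solution_Y by (rule ode_solution_diff)
  then have "u x - c * Y lam x = 0 \<and> u' x - c * Y' lam x = 0" if "x \<in> I" for x
    by (rule ode_solution_eq_0[OF _ lo_in_I _ _ that]) (simp_all add: Y_lo Y'_lo left c_def)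
  then have u: "u x = c * Y lam x" and u': "u' x = c * Y' lam x" if "x \<in> I" for x
    using that by auto
  have "c \<noteq> 0"
    using u[OF x0(1)] x0(2) by auto
  moreover have "c * defect lam = 0"
    using u[OF hi_in_I] u'[OF hi_in_I] right by (simp add: defect_def algebra_simps)
  ultimately show ?thesis
    using that u by simp
qed

lemma robin_eigenvalue_iff_defect: "robin_eigenvalue L a \<alpha> \<beta> lam \<longleftrightarrow> defect lam = 0"
proof
  assume "robin_eigenvalue L a \<alpha> \<beta> lam"
  then show "defect lam = 0"
    unfolding robin_eigenvalue_def using eigenpair_eq_multiple_of_Y by blast
next
  assume "defect lam = 0"
  have "robin_eigenpair L a \<alpha> \<beta> lam (Y lam)"
    unfolding robin_eigenpair_def Icc_eq_I
  proof (intro conjI exI)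
    show "\<exists>x\<in>I. Y lam x \<noteq> 0"
      using lo_less_hi by (intro bexI[of _ lo]) (auto simp: Y_lo)
    show "\<forall>x\<in>I. (Y lam has_real_derivative Y' lam x) (at x within I) \<and>
      (Y' lam has_real_derivative (a * x - lam) * Y lam x) (at x within I) \<and>
      - ((a * x - lam) * Y lam x) + a * x * Y lam x = lam * Y lam x"
      using Y_has_derivative Y'_has_derivative by (simp add: algebra_simps)
    show "Y' lam (- L / 2) = \<alpha> * Y lam (- L / 2)"
      using Y_lo Y'_lo by (simp add: lo_def)
    show "Y' lam (L / 2) = - \<beta> * Y lam (L / 2)"
      using \<open>defect lam = 0\<close> by (simp add: defect_def hi_def algebra_simps)
  qed
  then show "robin_eigenvalue L a \<alpha> \<beta> lam"
    unfolding robin_eigenvalue_def by blast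
qed

definition wronskian :: "real \<Rightarrow> real \<Rightarrow> real \<Rightarrow> real" where
  "wronskian lam mu x = Y lam x * Y' mu x - Y' lam x * Y mu x"

lemma wronskian_has_derivative:
  "(wronskian lam mu has_real_derivative (lam - mu) * Y lam x * Y mu x) (at x within S)"
proof -
  have "((\<lambda>x. Y lam x * Y' mu x - Y' lam x * Y mu x) has_real_derivative
      (Y' lam x * Y' mu x + (a * x - mu) * Y mu x * Y lam x) -
      ((a * x - lam) * Y lam x * Y mu x + Y' mu x * Y' lam x)) (at x within S)"
    by (intro DERIV_diff DERIV_mult Y_has_derivative Y'_has_derivative)
  then show ?thesis
    by (simp add: wronskian_def[abs_def] algebra_simps)
qed

lemma wronskian_lo: "wronskian lam mu lo = 0"
  by (simp add: wronskian_def Y_lo Y'_lo)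

lemma wronskian_hi:
  assumes "defect lam = 0" "defect mu = 0"
  shows "wronskian lam mu hi = 0"
proof -
  have "Y' lam hi = - \<beta> * Y lam hi" "Y' mu hi = - \<beta> * Y mu hi"
    using assms by (simp_all add: defect_def eq_neg_iff_add_eq_0)
  then show ?thesis
    by (simp add: wronskian_def)
qed

lemma wronskian_swap: "wronskian mu lam x = - wronskian lam mu x"
  by (simp add: wronskian_def)

lemma wronskian_less:
  assumes "lo \<le> s" "s < t" "t \<le> hi"
    and pos: "\<And>x. s < x \<Longrightarrow> x < t \<Longrightarrow> (lam - mu) * Y lam x * Y mu x > 0"
  shows "wronskian lam mu s < wronskian lam mu t"
proof (rule DERIV_within_Icc_pos_imp_less[of lo hi "wronskian lam mu" "\<lambda>x. (lam - mu) * Y lam x * Y mu x" s t])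
  show "\<forall>x\<in>I. (wronskian lam mu has_real_derivative (lam - mu) * Y lam x * Y mu x) (at x within I)"
    using wronskian_has_derivative by blast
qed (use assms in auto)

section \<open>Continuous dependence on the spectral parameter\<close>

lemma Y_energy_bound:
  assumes "x \<in> I"
  shows "(Y lam x)\<^sup>2 + (Y' lam x)\<^sup>2 \<le> (1 + \<alpha>\<^sup>2) * exp ((1 + \<bar>a\<bar> * L + \<bar>lam\<bar>) * L)"
proof -
  define K where "K = 1 + \<bar>a\<bar> * L + \<bar>lam\<bar>"
  have "K > 0"
    using L_pos by (simp add: K_def add_pos_nonneg)
  have "(Y lam x)\<^sup>2 + (Y' lam x)\<^sup>2 + 0 / K \<le> ((Y lam lo)\<^sup>2 + (Y' lam lo)\<^sup>2 + 0 / K) * exp (K * (x - lo))"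
  proof (rule gronwall_forward[OF _ _ \<open>K > 0\<close>])
    show "\<forall>x\<in>I. ((\<lambda>x. (Y lam x)\<^sup>2 + (Y' lam x)\<^sup>2) has_real_derivative
        2 * Y lam x * Y' lam x * (1 + (a * x - lam))) (at x within I)"
      using energy_has_derivative[OF ode_solution_Y] by blast
    show "\<forall>x\<in>I. 2 * Y lam x * Y' lam x * (1 + (a * x - lam)) \<le> K * ((Y lam x)\<^sup>2 + (Y' lam x)\<^sup>2) + 0"
      using energy_derivative_bound unfolding K_def by (simp add: abs_le_iff)
  qed (use assms in auto)
  also have "\<dots> \<le> (1 + \<alpha>\<^sup>2) * exp (K * L)"
  proof -
    have "K * (x - lo) \<le> K * L"
      using assms hi_minus_lo \<open>K > 0\<close> by (intro mult_left_mono) auto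
    then have "exp (K * (x - lo)) \<le> exp (K * L)"
      by simp
    then show ?thesis
      using mult_left_mono[of _ _ "1 + \<alpha>\<^sup>2"] by (simp add: Y_lo Y'_lo)
  qed
  finally show ?thesis
    by (simp add: K_def)
qed

lemma Y_lipschitz_in_lam:
  "\<exists>C\<ge>0. \<forall>mu. \<bar>mu - lam\<bar> \<le> 1 \<longrightarrow>
     (\<forall>x\<in>I. (Y mu x - Y lam x)\<^sup>2 + (Y' mu x - Y' lam x)\<^sup>2 \<le> (mu - lam)\<^sup>2 * C)"
proof -
  define B where "B = (1 + \<alpha>\<^sup>2) * exp ((1 + \<bar>a\<bar> * L + \<bar>lam\<bar>) * L)"
  define K where "K = 3 + \<bar>a\<bar> * L + \<bar>lam\<bar>"
  have "K > 0" "B \<ge> 0"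
    using L_pos by (simp_all add: K_def B_def add_pos_nonneg)
  have "(Y mu x - Y lam x)\<^sup>2 + (Y' mu x - Y' lam x)\<^sup>2 \<le> (mu - lam)\<^sup>2 * (B * exp (K * L) / K)"
    if mu: "\<bar>mu - lam\<bar> \<le> 1" and x: "x \<in> I" for mu x
  proof -
    define d where "d x = Y mu x - Y lam x" for x
    define e where "e x = Y' mu x - Y' lam x" for x
    define E' where "E' x = 2 * d x * e x * (1 + (a * x - mu)) + 2 * e x * ((lam - mu) * Y lam x)" for x
    define D where "D = (mu - lam)\<^sup>2 * B"
    have "D \<ge> 0"
      using \<open>B \<ge> 0\<close> by (simp add: D_def)
    have der: "\<forall>x\<in>I. ((\<lambda>x. (d x)\<^sup>2 + (e x)\<^sup>2) has_real_derivative E' x) (at x within I)"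
    proof
      fix x
      have "(d has_real_derivative e x) (at x within I)"
        unfolding d_def[abs_def] e_def by (intro DERIV_diff Y_has_derivative)
      moreover have "(e has_real_derivative (a * x - mu) * d x + (lam - mu) * Y lam x) (at x within I)"
      proof -
        have "(e has_real_derivative (a * x - mu) * Y mu x - (a * x - lam) * Y lam x) (at x within I)"
          unfolding e_def[abs_def] by (intro DERIV_diff Y'_has_derivative)
        then show ?thesis
          by (simp add: d_def algebra_simps)
      qed
      ultimately show "((\<lambda>x. (d x)\<^sup>2 + (e x)\<^sup>2) has_real_derivative E' x) (at x within I)"
        by (auto intro!: derivative_eq_intros simp: E'_def algebra_simps)
    qed
    have bound: "\<forall>x\<in>I. E' x \<le> K * ((d x)\<^sup>2 + (e x)\<^sup>2) + D"
    proof
      fix x assume x: "x \<in> I"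
      have "2 * d x * e x * (1 + (a * x - mu)) \<le> (1 + \<bar>a\<bar> * L + \<bar>mu\<bar>) * ((d x)\<^sup>2 + (e x)\<^sup>2)"
        using energy_derivative_bound[OF x] abs_le_iff by blast
      also have "\<dots> \<le> (2 + \<bar>a\<bar> * L + \<bar>lam\<bar>) * ((d x)\<^sup>2 + (e x)\<^sup>2)"
        using mu by (intro mult_right_mono) auto
      finally have 1: "2 * d x * e x * (1 + (a * x - mu)) \<le> (2 + \<bar>a\<bar> * L + \<bar>lam\<bar>) * ((d x)\<^sup>2 + (e x)\<^sup>2)" .
      have "(Y lam x)\<^sup>2 \<le> B"
        using Y_energy_bound[OF x, of lam] unfolding B_def by (smt (verit) zero_le_power2)
      then have "((lam - mu) * Y lam x)\<^sup>2 \<le> D"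
        by (simp add: D_def power_mult_distrib power2_commute mult_left_mono)
      then have 2: "2 * e x * ((lam - mu) * Y lam x) \<le> (d x)\<^sup>2 + (e x)\<^sup>2 + D"
        using sum_squares_bound[of "e x" "(lam - mu) * Y lam x"] by (smt (verit) zero_le_power2)
      show "E' x \<le> K * ((d x)\<^sup>2 + (e x)\<^sup>2) + D"
        using 1 2 by (simp add: E'_def K_def algebra_simps)
    qed
    have "(d x)\<^sup>2 + (e x)\<^sup>2 + D / K \<le> ((d lo)\<^sup>2 + (e lo)\<^sup>2 + D / K) * exp (K * (x - lo))"
      using x by (intro gronwall_forward[OF der bound \<open>K > 0\<close>]) auto
    also have "\<dots> \<le> D / K * exp (K * L)"
    proof -
      have "K * (x - lo) \<le> K * L"
        using x hi_minus_lo \<open>K > 0\<close> by (intro mult_left_mono) auto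
      then have "exp (K * (x - lo)) \<le> exp (K * L)"
        by simp
      then have "D * exp (K * (x - lo)) / K \<le> D * exp (K * L) / K"
        using \<open>K > 0\<close> \<open>D \<ge> 0\<close> by (intro divide_right_mono mult_left_mono) auto
      then show ?thesis
        by (simp add: d_def e_def Y_lo Y'_lo)
    qed
    finally have "(d x)\<^sup>2 + (e x)\<^sup>2 \<le> D / K * exp (K * L)"
      using \<open>D \<ge> 0\<close> \<open>K > 0\<close> by (smt (verit) divide_nonneg_pos)
    then show ?thesis
      by (simp add: d_def e_def D_def mult.assoc)
  qed
  moreover have "B * exp (K * L) / K \<ge> 0"
    using \<open>B \<ge> 0\<close> \<open>K > 0\<close> by simp
  ultimately show ?thesis
    by blast
qed

lemma Y_continuous_in_lam:
  assumes "\<epsilon> > 0"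
  shows "\<exists>\<delta>>0. \<forall>mu. \<bar>mu - lam\<bar> < \<delta> \<longrightarrow>
    (\<forall>x\<in>I. \<bar>Y mu x - Y lam x\<bar> < \<epsilon> \<and> \<bar>Y' mu x - Y' lam x\<bar> < \<epsilon>)"
proof -
  obtain C where "C \<ge> 0" and C: "\<And>mu x. \<bar>mu - lam\<bar> \<le> 1 \<Longrightarrow> x \<in> I \<Longrightarrow>
      (Y mu x - Y lam x)\<^sup>2 + (Y' mu x - Y' lam x)\<^sup>2 \<le> (mu - lam)\<^sup>2 * C"
    using Y_lipschitz_in_lam by blast
  define \<delta> where "\<delta> = min 1 (\<epsilon> / (C + 1))"
  have "\<delta> > 0"
    using assms \<open>C \<ge> 0\<close> by (simp add: \<delta>_def)
  moreover have "\<bar>Y mu x - Y lam x\<bar> < \<epsilon> \<and> \<bar>Y' mu x - Y' lam x\<bar> < \<epsilon>"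
    if mu: "\<bar>mu - lam\<bar> < \<delta>" and x: "x \<in> I" for mu x
  proof -
    have "\<bar>mu - lam\<bar> * (C + 1) < \<epsilon>"
      using mu \<open>C \<ge> 0\<close> by (simp add: \<delta>_def less_divide_eq)
    then have "(\<bar>mu - lam\<bar> * (C + 1))\<^sup>2 < \<epsilon>\<^sup>2"
      using \<open>C \<ge> 0\<close> by (intro power_strict_mono) auto
    moreover have "(mu - lam)\<^sup>2 * C \<le> (\<bar>mu - lam\<bar> * (C + 1))\<^sup>2"
    proof -
      have "C \<le> (C + 1)\<^sup>2"
        using \<open>C \<ge> 0\<close> by (simp add: power2_eq_square algebra_simps)
      then have "(mu - lam)\<^sup>2 * C \<le> (mu - lam)\<^sup>2 * (C + 1)\<^sup>2"
        by (simp add: mult_left_mono)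
      then show ?thesis
        by (simp add: power_mult_distrib)
    qed
    ultimately have "(Y mu x - Y lam x)\<^sup>2 + (Y' mu x - Y' lam x)\<^sup>2 < \<epsilon>\<^sup>2"
      using C[OF _ x, of mu] mu by (simp add: \<delta>_def)
    then have "(Y mu x - Y lam x)\<^sup>2 < \<epsilon>\<^sup>2" "(Y' mu x - Y' lam x)\<^sup>2 < \<epsilon>\<^sup>2"
      by (smt (verit) zero_le_power2)+
    moreover have "\<bar>t\<bar> < \<epsilon>" if "t\<^sup>2 < \<epsilon>\<^sup>2" for t
      using that assms by (metis power2_abs power_less_imp_less_base less_imp_le)
    ultimately show ?thesis
      by blast
  qed
  ultimately show ?thesis
    by blast
qed

lemma isCont_defect: "isCont defect lam"
  unfolding isCont_def LIM_eq
proof (intro allI impI)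
  fix r :: real assume "r > 0"
  define \<epsilon> where "\<epsilon> = r / (1 + \<bar>\<beta>\<bar>)"
  have "\<epsilon> > 0"
    using \<open>r > 0\<close> by (simp add: \<epsilon>_def add_pos_nonneg)
  then obtain \<delta> where "\<delta> > 0" and \<delta>: "\<And>mu. \<bar>mu - lam\<bar> < \<delta> \<Longrightarrow>
      \<bar>Y mu hi - Y lam hi\<bar> < \<epsilon> \<and> \<bar>Y' mu hi - Y' lam hi\<bar> < \<epsilon>"
    using Y_continuous_in_lam hi_in_I by meson
  have "\<bar>defect mu - defect lam\<bar> < r" if "\<bar>mu - lam\<bar> < \<delta>" for mu
  proof -
    have "\<bar>defect mu - defect lam\<bar> \<le> \<bar>Y' mu hi - Y' lam hi\<bar> + \<bar>\<beta>\<bar> * \<bar>Y mu hi - Y lam hi\<bar>"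
      unfolding defect_def by (metis abs_mult abs_triangle_ineq add_diff_add right_diff_distrib)
    also have "\<dots> < \<epsilon> + \<bar>\<beta>\<bar> * \<epsilon>"
      using \<delta>[OF that] by (intro add_less_le_mono mult_left_mono) auto
    also have "\<dots> = (1 + \<bar>\<beta>\<bar>) * \<epsilon>"
      by (simp add: algebra_simps)
    also have "\<dots> = r"
      using add_pos_nonneg[of 1 "\<bar>\<beta>\<bar>"] by (simp add: \<epsilon>_def)
    finally show ?thesis .
  qed
  then show "\<exists>s>0. \<forall>mu. mu \<noteq> lam \<and> norm (mu - lam) < s \<longrightarrow> norm (defect mu - defect lam) < r"
    using \<open>\<delta> > 0\<close> by auto
qed

section \<open>Positive shooting solutions\<close>

definition Y_positive :: "real \<Rightarrow> bool" where
  "Y_positive lam \<longleftrightarrow> (\<forall>x\<in>I. Y lam x > 0)"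

lemma Y_first_zero:
  assumes "\<not> Y_positive lam"
  obtains z where "lo < z" "z \<le> hi" "Y lam z = 0" "Y' lam z < 0" "\<And>x. lo \<le> x \<Longrightarrow> x < z \<Longrightarrow> Y lam x > 0"
proof -
  obtain x where "x \<in> I" "Y lam x \<le> 0"
    using assms by (auto simp: Y_positive_def not_less)
  then obtain z where z: "lo < z" "z \<le> x" "Y lam z = 0" "\<And>y. lo \<le> y \<Longrightarrow> y < z \<Longrightarrow> Y lam y > 0"
    using first_zero[of lo hi "Y lam" x] continuous_on_Y Y_lo by auto
  have "Y' lam z \<le> 0"
    using z by (intro DERIV_nonpos_if_ge_on_left[OF Y_has_derivative, of lo]) (auto intro: less_imp_le)
  moreover have "Y' lam z \<noteq> 0"
    using Y'_nonzero_at_zero z \<open>x \<in> I\<close> by auto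
  ultimately show ?thesis
    using that z \<open>x \<in> I\<close> by auto
qed

text \<open>Sturm comparison: the Wronskian of \<open>Y mu\<close> and \<open>Y lam\<close> vanishes at \<open>lo\<close> and increases up to
  the first zero of \<open>Y lam\<close>, where its sign is that of \<open>Y' lam\<close>.\<close>

lemma Y_positive_antimono:
  assumes "lam < mu" "Y_positive mu"
  shows "Y_positive lam"
proof (rule ccontr)
  assume "\<not> Y_positive lam"
  then obtain z where z: "lo < z" "z \<le> hi" "Y lam z = 0" "Y' lam z < 0"
    and before: "\<And>x. lo \<le> x \<Longrightarrow> x < z \<Longrightarrow> Y lam x > 0"
    using Y_first_zero by blast
  have Ymu: "Y mu x > 0" if "x \<in> I" for x
    using assms(2) that by (simp add: Y_positive_def)
  have "wronskian mu lam lo < wronskian mu lam z"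
  proof (rule wronskian_less)
    fix x assume "lo < x" "x < z"
    then have "Y mu x > 0" "Y lam x > 0"
      using Ymu before z by auto
    then show "(mu - lam) * Y mu x * Y lam x > 0"
      using assms(1) by simp
  qed (use z in auto)
  moreover have "wronskian mu lam z < 0"
    using z Ymu[of z] by (simp add: wronskian_def mult_pos_neg)
  ultimately show False
    by (simp add: wronskian_lo)
qed

lemma Y_positive_open:
  assumes "Y_positive lam"
  shows "\<exists>\<delta>>0. \<forall>mu. \<bar>mu - lam\<bar> < \<delta> \<longrightarrow> Y_positive mu"
proof -
  obtain xm where "xm \<in> I" and xm: "\<And>y. y \<in> I \<Longrightarrow> Y lam xm \<le> Y lam y"
    using continuous_attains_inf[of I "Y lam"] continuous_on_Y lo_less_hi by fastforce
  have "Y lam xm > 0"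
    using assms \<open>xm \<in> I\<close> by (simp add: Y_positive_def)
  then obtain \<delta> where "\<delta> > 0" and \<delta>: "\<And>mu x. \<bar>mu - lam\<bar> < \<delta> \<Longrightarrow> x \<in> I \<Longrightarrow> \<bar>Y mu x - Y lam x\<bar> < Y lam xm"
    using Y_continuous_in_lam by meson
  have "Y_positive mu" if "\<bar>mu - lam\<bar> < \<delta>" for mu
    unfolding Y_positive_def using \<delta>[OF that] xm by force
  then show ?thesis
    using \<open>\<delta> > 0\<close> by blast
qed

text \<open>Riccati comparison: \<open>F = Y' - \<phi> Y\<close> satisfies \<open>F' = (a x - lam - \<phi>' - \<phi>\<^sup>2) Y - \<phi> F\<close>, so neither
  \<open>Y\<close> nor \<open>F\<close> can be the first of the two to vanish.\<close>

lemma Y_above_riccati_subsolution: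
  fixes \<phi> \<phi>' :: "real \<Rightarrow> real"
  assumes \<phi>_der: "\<And>x. (\<phi> has_real_derivative \<phi>' x) (at x)"
    and sub: "\<And>x. x \<in> I \<Longrightarrow> \<phi>' x + (\<phi> x)\<^sup>2 < a * x - lam"
    and start: "\<phi> lo < \<alpha>" and x: "x \<in> I"
  shows "Y lam x > 0 \<and> Y' lam x > \<phi> x * Y lam x"
proof (rule ccontr)
  assume contra: "\<not> (Y lam x > 0 \<and> Y' lam x > \<phi> x * Y lam x)"
  define F where "F x = Y' lam x - \<phi> x * Y lam x" for x
  have F_der: "(F has_real_derivative (a * x - lam - \<phi>' x - (\<phi> x)\<^sup>2) * Y lam x - \<phi> x * F x) (at x)" for x
  proof -
    have "(F has_real_derivative (a * x - lam) * Y lam x - (\<phi>' x * Y lam x + Y' lam x * \<phi> x)) (at x)"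
      unfolding F_def[abs_def] by (intro DERIV_diff DERIV_mult \<phi>_der Y_has_derivative Y'_has_derivative)
    then show ?thesis
      by (simp add: F_def power2_eq_square algebra_simps)
  qed
  define m where "m x = min (Y lam x) (F x)" for x
  have "m x \<le> 0"
    using contra by (simp add: m_def F_def min_le_iff_disj not_less)
  moreover have "continuous_on I F"
    by (rule DERIV_continuous_on) (rule has_field_derivative_at_within[OF F_der])
  then have "continuous_on I m"
    unfolding m_def[abs_def] by (intro continuous_on_min continuous_on_Y)
  moreover have "m lo > 0"
    using start by (simp add: m_def F_def Y_lo Y'_lo)
  ultimately obtain z where z: "lo < z" "z \<le> x" "m z = 0"
    and before: "\<And>y. lo \<le> y \<Longrightarrow> y < z \<Longrightarrow> Y lam y > 0 \<and> F y > 0"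
    using first_zero[of lo hi m x] x by (auto simp: m_def)
  then have "z \<in> I" "Y lam z \<ge> 0" "F z \<ge> 0"
    using x by (auto simp: m_def)
  show False
  proof (cases "Y lam z = 0")
    case True
    have "Y' lam z \<le> 0"
      using before True z by (intro DERIV_nonpos_if_ge_on_left[OF Y_has_derivative, of lo]) (auto intro: less_imp_le)
    then have "Y' lam z = 0"
      using \<open>F z \<ge> 0\<close> True by (simp add: F_def)
    then show False
      using Y'_nonzero_at_zero[OF \<open>z \<in> I\<close> True] by simp
  next
    case False
    then have "Y lam z > 0" "F z = 0"
      using z \<open>Y lam z \<ge> 0\<close> by (auto simp: m_def min_def split: if_splits)
    then have "(a * z - lam - \<phi>' z - (\<phi> z)\<^sup>2) * Y lam z - \<phi> z * F z > 0"
      using sub[OF \<open>z \<in> I\<close>] by simp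
    moreover have "(a * z - lam - \<phi>' z - (\<phi> z)\<^sup>2) * Y lam z - \<phi> z * F z \<le> 0"
      using before z \<open>F z = 0\<close> by (intro DERIV_nonpos_if_ge_on_left[OF F_der, of lo]) (auto intro: less_imp_le)
    ultimately show False
      by linarith
  qed
qed

text \<open>A linear subsolution with \<open>\<phi> hi + \<beta> \<ge> 1\<close> exists once \<open>lam\<close> is negative enough, and then
  \<open>defect lam = (Y' lam hi - \<phi> hi * Y lam hi) + (\<phi> hi + \<beta>) * Y lam hi > 0\<close>.\<close>

lemma exists_Y_positive_defect_pos: "\<exists>lam. Y_positive lam \<and> defect lam > 0"
proof -
  define s where "s = (\<bar>\<alpha>\<bar> + \<bar>\<beta>\<bar> + 2) / L"
  define P where "P = 2 * \<bar>\<alpha>\<bar> + \<bar>\<beta>\<bar> + 3"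
  define lam where "lam = - (s + P\<^sup>2 + 1 + \<bar>a\<bar> * L)"
  define \<phi> where "\<phi> x = \<alpha> - 1 + s * (x - lo)" for x
  have sL: "s * L = \<bar>\<alpha>\<bar> + \<bar>\<beta>\<bar> + 2" and "s > 0"
    using L_pos by (simp_all add: s_def add_pos_nonneg)
  have sub: "s + (\<phi> x)\<^sup>2 < a * x - lam" if "x \<in> I" for x
  proof -
    have "0 \<le> s * (x - lo)" "s * (x - lo) \<le> s * L"
      using that hi_minus_lo \<open>s > 0\<close> by (auto intro: mult_left_mono)
    then have "\<bar>\<phi> x\<bar> \<le> P"
      unfolding \<phi>_def P_def using sL by linarith
    then have "(\<phi> x)\<^sup>2 \<le> P\<^sup>2"
      by (metis abs_ge_zero power2_abs power_mono)
    moreover have "\<bar>a * x\<bar> \<le> \<bar>a\<bar> * L"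
      using abs_le_L[OF that] by (simp add: abs_mult mult_left_mono)
    ultimately show ?thesis
      unfolding lam_def by linarith
  qed
  have \<phi>_der: "(\<phi> has_real_derivative s) (at x)" for x
    unfolding \<phi>_def[abs_def] by (auto intro!: derivative_eq_intros)
  have above: "Y lam x > 0 \<and> Y' lam x > \<phi> x * Y lam x" if "x \<in> I" for x
    by (rule Y_above_riccati_subsolution[OF \<phi>_der]) (use sub that in \<open>auto simp: \<phi>_def\<close>)
  have "\<phi> hi + \<beta> \<ge> 1"
    using sL hi_minus_lo by (simp add: \<phi>_def)
  then have "(\<phi> hi + \<beta>) * Y lam hi > 0"
    using above[OF hi_in_I] by simp
  then have "defect lam > 0"
    using above[OF hi_in_I] by (simp add: defect_def algebra_simps)
  moreover have "Y_positive lam"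
    using above by (simp add: Y_positive_def)
  ultimately show ?thesis
    by blast
qed

text \<open>Meaningful only if \<open>{lam. Y_positive lam}\<close> is bounded above, which the lemmas below assume.\<close>

definition lam_star :: real where
  "lam_star = Sup {lam. Y_positive lam}"

lemma bdd_above_Y_positive:
  assumes "\<not> Y_positive b"
  shows "bdd_above {lam. Y_positive lam}"
proof (rule bdd_aboveI[of _ b])
  fix lam assume "lam \<in> {lam. Y_positive lam}"
  then show "lam \<le> b"
    using Y_positive_antimono assms by (metis mem_Collect_eq not_le)
qed

lemma Y_positive_iff_less_lam_star:
  assumes bdd: "bdd_above {lam. Y_positive lam}"
  shows "Y_positive lam \<longleftrightarrow> lam < lam_star"
proof
  assume "Y_positive lam"
  then obtain \<delta> where "\<delta> > 0" and \<delta>: "\<And>mu. \<bar>mu - lam\<bar> < \<delta> \<Longrightarrow> Y_positive mu"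
    using Y_positive_open by blast
  then have "Y_positive (lam + \<delta> / 2)"
    by simp
  then have "lam + \<delta> / 2 \<le> lam_star"
    unfolding lam_star_def using bdd by (intro cSup_upper) auto
  then show "lam < lam_star"
    using \<open>\<delta> > 0\<close> by simp
next
  assume "lam < lam_star"
  moreover have "{lam. Y_positive lam} \<noteq> {}"
    using exists_Y_positive_defect_pos by auto
  ultimately obtain mu where "Y_positive mu" "lam < mu"
    unfolding lam_star_def using less_cSup_iff[OF _ bdd] by auto
  then show "Y_positive lam"
    using Y_positive_antimono by blast
qed

lemma defect_lam_star_neg:
  assumes bdd: "bdd_above {lam. Y_positive lam}"
  shows "defect lam_star < 0"
proof -
  have nonneg: "Y lam_star x \<ge> 0" if x: "x \<in> I" for x
  proof (rule ccontr)
    assume "\<not> Y lam_star x \<ge> 0"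
    then obtain \<delta> where "\<delta> > 0" and \<delta>: "\<And>mu. \<bar>mu - lam_star\<bar> < \<delta> \<Longrightarrow> \<bar>Y mu x - Y lam_star x\<bar> < - Y lam_star x"
      using Y_continuous_in_lam[of "- Y lam_star x" lam_star] x by force
    have "Y_positive (lam_star - \<delta> / 2)"
      using Y_positive_iff_less_lam_star[OF bdd] \<open>\<delta> > 0\<close> by simp
    then have "Y (lam_star - \<delta> / 2) x > 0"
      using x by (simp add: Y_positive_def)
    moreover have "\<bar>Y (lam_star - \<delta> / 2) x - Y lam_star x\<bar> < - Y lam_star x"
      using \<delta> \<open>\<delta> > 0\<close> by simp
    ultimately show False
      by linarith
  qed
  obtain x where x: "x \<in> I" "Y lam_star x \<le> 0"
    using Y_positive_iff_less_lam_star[OF bdd, of lam_star] by (auto simp: Y_positive_def not_less)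
  then have "Y lam_star x = 0"
    using nonneg by (simp add: order_antisym)
  have "x = hi"
  proof (rule ccontr)
    assume "x \<noteq> hi"
    have "lo < x"
      using x \<open>Y lam_star x = 0\<close> Y_lo by (metis atLeastAtMost_iff order_le_less zero_neq_one)
    moreover have "x < hi"
      using x \<open>x \<noteq> hi\<close> by simp
    ultimately have local_min: "\<forall>y. \<bar>x - y\<bar> < min (x - lo) (hi - x) \<longrightarrow> Y lam_star x \<le> Y lam_star y"
      using nonneg \<open>Y lam_star x = 0\<close> by (auto simp: abs_less_iff)
    have "Y' lam_star x = 0"
      by (rule DERIV_local_min[OF Y_has_derivative _ local_min]) (use \<open>lo < x\<close> \<open>x < hi\<close> in simp)
    then show False
      using Y'_nonzero_at_zero x \<open>Y lam_star x = 0\<close> by blast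
  qed
  have "Y' lam_star hi \<le> 0"
    using nonneg \<open>Y lam_star x = 0\<close> \<open>x = hi\<close> lo_less_hi
    by (intro DERIV_nonpos_if_ge_on_left[OF Y_has_derivative, of lo]) auto
  moreover have "Y' lam_star hi \<noteq> 0"
    using Y'_nonzero_at_zero hi_in_I \<open>Y lam_star x = 0\<close> \<open>x = hi\<close> by blast
  ultimately show ?thesis
    using \<open>Y lam_star x = 0\<close> \<open>x = hi\<close> by (simp add: defect_def)
qed

lemma eigenvalue_below_lam_star:
  assumes bdd: "bdd_above {lam. Y_positive lam}"
  shows "\<exists>mu<lam_star. defect mu = 0"
proof -
  obtain l0 where "Y_positive l0" "defect l0 > 0"
    using exists_Y_positive_defect_pos by blast
  then have "l0 < lam_star"
    using Y_positive_iff_less_lam_star[OF bdd] by simp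
  then obtain mu where "l0 \<le> mu" "mu \<le> lam_star" "defect mu = 0"
    using IVT2[of defect lam_star 0 l0] defect_lam_star_neg[OF bdd] \<open>defect l0 > 0\<close> isCont_defect
    by force
  moreover have "mu \<noteq> lam_star"
    using defect_lam_star_neg[OF bdd] \<open>defect mu = 0\<close> by auto
  ultimately show ?thesis
    by (auto simp: order_le_less)
qed

section \<open>Shooting solutions with a single sign change\<close>

definition Y_changes_sign_twice :: "real \<Rightarrow> bool" where
  "Y_changes_sign_twice lam \<longleftrightarrow> (\<exists>x1 x2 x3. lo \<le> x1 \<and> x1 < x2 \<and> x2 < x3 \<and> x3 \<le> hi \<and>
     Y lam x1 > 0 \<and> Y lam x2 < 0 \<and> Y lam x3 > 0)"

lemma Y_changes_sign_twice_not_positive: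
  assumes "Y_changes_sign_twice lam"
  shows "\<not> Y_positive lam"
proof -
  obtain x1 x2 x3 where "lo \<le> x1" "x1 < x2" "x2 < x3" "x3 \<le> hi" "Y lam x2 < 0"
    using assms unfolding Y_changes_sign_twice_def by blast
  then have "x2 \<in> I" "Y lam x2 < 0"
    by auto
  then show ?thesis
    unfolding Y_positive_def by force
qed

lemma Y_changes_sign_twice_open:
  assumes "Y_changes_sign_twice lam"
  shows "\<exists>\<delta>>0. \<forall>mu. \<bar>mu - lam\<bar> < \<delta> \<longrightarrow> Y_changes_sign_twice mu"
proof -
  obtain x1 x2 x3 where x: "lo \<le> x1" "x1 < x2" "x2 < x3" "x3 \<le> hi"
    and signs: "Y lam x1 > 0" "Y lam x2 < 0" "Y lam x3 > 0"
    using assms unfolding Y_changes_sign_twice_def by blast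
  define e where "e = min (Y lam x1) (min (- Y lam x2) (Y lam x3))"
  have "e > 0"
    using signs by (simp add: e_def)
  then obtain \<delta> where "\<delta> > 0" and \<delta>: "\<And>mu x. \<bar>mu - lam\<bar> < \<delta> \<Longrightarrow> x \<in> I \<Longrightarrow> \<bar>Y mu x - Y lam x\<bar> < e"
    using Y_continuous_in_lam by meson
  have "Y_changes_sign_twice mu" if "\<bar>mu - lam\<bar> < \<delta>" for mu
  proof -
    have "\<bar>Y mu x1 - Y lam x1\<bar> < e" "\<bar>Y mu x2 - Y lam x2\<bar> < e" "\<bar>Y mu x3 - Y lam x3\<bar> < e"
      using \<delta>[OF that] x by auto
    moreover have "e \<le> Y lam x1" "e \<le> - Y lam x2" "e \<le> Y lam x3"
      by (auto simp: e_def)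
    ultimately show ?thesis
      unfolding Y_changes_sign_twice_def using x by (intro exI[of _ x1] exI[of _ x2] exI[of _ x3]) auto
  qed
  then show ?thesis
    using \<open>\<delta> > 0\<close> by blast
qed

lemma Y_single_sign_change:
  assumes "\<not> Y_positive lam" "\<not> Y_changes_sign_twice lam"
  obtains z where "lo < z" "z \<le> hi" "Y lam z = 0" "Y' lam z < 0"
    "\<And>x. lo \<le> x \<Longrightarrow> x < z \<Longrightarrow> Y lam x > 0"
    "\<And>x. z < x \<Longrightarrow> x \<le> hi \<Longrightarrow> Y lam x \<le> 0"
    "\<And>x. z < x \<Longrightarrow> x < hi \<Longrightarrow> Y lam x < 0"
proof -
  obtain z where z: "lo < z" "z \<le> hi" "Y lam z = 0" "Y' lam z < 0"
    and before: "\<And>x. lo \<le> x \<Longrightarrow> x < z \<Longrightarrow> Y lam x > 0"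
    using Y_first_zero[OF assms(1)] by blast
  have after: "Y lam x \<le> 0" if "z < x" "x \<le> hi" for x
  proof (rule ccontr)
    assume "\<not> Y lam x \<le> 0"
    obtain x2 where "z < x2" "x2 < x" "Y lam x2 < 0"
      using DERIV_neg_imp_smaller_right[OF Y_has_derivative z(4) \<open>z < x\<close>] z(3) by auto
    then have "Y_changes_sign_twice lam"
      unfolding Y_changes_sign_twice_def using \<open>\<not> Y lam x \<le> 0\<close> that z Y_lo lo_less_hi
      by (intro exI[of _ lo] exI[of _ x2] exI[of _ x]) auto
    then show False
      using assms(2) by blast
  qed
  have "Y lam x < 0" if "z < x" "x < hi" for x
  proof (rule ccontr)
    assume "\<not> Y lam x < 0"
    then have "Y lam x = 0"
      using after that by force
    have "\<forall>y. \<bar>x - y\<bar> < min (x - z) (hi - x) \<longrightarrow> Y lam y \<le> Y lam x"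
      using after \<open>Y lam x = 0\<close> by (auto simp: abs_less_iff)
    then have "Y' lam x = 0"
      by (rule DERIV_local_max[OF Y_has_derivative, rotated]) (use that in simp)
    then show False
      using Y'_nonzero_at_zero[of x lam] \<open>Y lam x = 0\<close> that z by auto
  qed
  then show ?thesis
    using that z before after by blast
qed

text \<open>A profile of \<open>Y lam\<close> that excludes two sign changes and survives small perturbations of \<open>lam\<close>.\<close>

definition crossing_profile :: "real \<Rightarrow> real \<Rightarrow> real \<Rightarrow> bool" where
  "crossing_profile lam p s \<longleftrightarrow> lo \<le> p \<and> p \<le> s \<and> s \<le> hi \<and>
     (\<forall>x. lo \<le> x \<and> x \<le> p \<longrightarrow> Y lam x > 0) \<and> (\<forall>x. p \<le> x \<and> x \<le> s \<longrightarrow> Y' lam x < 0) \<and>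
     (\<forall>x. s < x \<and> x \<le> hi \<longrightarrow> Y lam x < 0)"

lemma crossing_profile_not_twice:
  assumes "crossing_profile lam p s"
  shows "\<not> Y_changes_sign_twice lam"
proof
  assume "Y_changes_sign_twice lam"
  then obtain x1 x2 x3 where x: "lo \<le> x1" "x1 < x2" "x2 < x3" "x3 \<le> hi"
    and signs: "Y lam x1 > 0" "Y lam x2 < 0" "Y lam x3 > 0"
    unfolding Y_changes_sign_twice_def by blast
  have p: "lo \<le> p" "p \<le> s" "s \<le> hi" "\<And>x. lo \<le> x \<Longrightarrow> x \<le> p \<Longrightarrow> Y lam x > 0"
    "\<And>x. p \<le> x \<Longrightarrow> x \<le> s \<Longrightarrow> Y' lam x < 0" "\<And>x. s < x \<Longrightarrow> x \<le> hi \<Longrightarrow> Y lam x < 0"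
    using assms unfolding crossing_profile_def by blast+
  have "p < x2"
    using p(4)[of x2] signs x by (cases "p < x2") auto
  moreover have "x3 \<le> s"
    using p(6)[of x3] signs x by (cases "x3 \<le> s") auto
  ultimately have "- Y lam x2 < - Y lam x3"
    using x p(5) lo_less_hi
    by (intro DERIV_within_Icc_pos_imp_less[of x2 x3 "\<lambda>x. - Y lam x" "\<lambda>x. - Y' lam x"])
      (auto intro!: DERIV_minus Y_has_derivative)
  then show False
    using signs by simp
qed

lemma crossing_profile_stable:
  assumes ps: "lo \<le> p" "p \<le> s" "s \<le> hi"
    and pos: "\<forall>x. lo \<le> x \<and> x \<le> p \<longrightarrow> Y lam x > 0"
    and dec: "\<forall>x. p \<le> x \<and> x \<le> s \<longrightarrow> Y' lam x < 0"
    and neg: "s = hi \<or> (\<forall>x. s \<le> x \<and> x \<le> hi \<longrightarrow> Y lam x < 0)"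
  shows "\<exists>\<delta>>0. \<forall>mu. \<bar>mu - lam\<bar> < \<delta> \<longrightarrow> crossing_profile mu p s"
proof -
  obtain x1 where x1: "x1 \<in> {lo..p}" "\<forall>y\<in>{lo..p}. Y lam x1 \<le> Y lam y"
    using continuous_attains_inf[of "{lo..p}" "Y lam"] continuous_on_Y ps by auto
  obtain x2 where x2: "x2 \<in> {p..s}" "\<forall>y\<in>{p..s}. Y' lam y \<le> Y' lam x2"
    using continuous_attains_sup[of "{p..s}" "Y' lam"] continuous_on_Y' ps by auto
  obtain m3 where "m3 > 0" and m3: "s = hi \<or> (\<forall>x. s \<le> x \<and> x \<le> hi \<longrightarrow> Y lam x \<le> - m3)"
  proof (cases "s = hi")
    case False
    obtain x3 where x3: "x3 \<in> {s..hi}" "\<forall>y\<in>{s..hi}. Y lam y \<le> Y lam x3"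
      using continuous_attains_sup[of "{s..hi}" "Y lam"] continuous_on_Y ps by auto
    have "Y lam x3 < 0"
      using neg False x3 by auto
    then show ?thesis
      using that[of "- Y lam x3"] x3 by auto
  qed (use that[of 1] in simp)
  define e where "e = min (Y lam x1) (min (- Y' lam x2) m3)"
  have "e > 0"
    unfolding e_def using pos dec x1 x2 \<open>m3 > 0\<close> by auto
  then obtain \<delta> where "\<delta> > 0" and \<delta>: "\<And>mu x. \<bar>mu - lam\<bar> < \<delta> \<Longrightarrow> x \<in> I \<Longrightarrow>
      \<bar>Y mu x - Y lam x\<bar> < e \<and> \<bar>Y' mu x - Y' lam x\<bar> < e"
    using Y_continuous_in_lam by meson
  have "crossing_profile mu p s" if mu: "\<bar>mu - lam\<bar> < \<delta>" for mu
  proof -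
    have "Y mu x > 0" if "lo \<le> x" "x \<le> p" for x
    proof -
      have "\<bar>Y mu x - Y lam x\<bar> < e" "Y lam x1 \<le> Y lam x" "e \<le> Y lam x1"
        using \<delta>[OF mu, of x] x1 that ps by (auto simp: e_def)
      then show ?thesis
        by linarith
    qed
    moreover have "Y' mu x < 0" if "p \<le> x" "x \<le> s" for x
    proof -
      have "\<bar>Y' mu x - Y' lam x\<bar> < e" "Y' lam x \<le> Y' lam x2" "e \<le> - Y' lam x2"
        using \<delta>[OF mu, of x] x2 that ps by (auto simp: e_def)
      then show ?thesis
        by linarith
    qed
    moreover have "Y mu x < 0" if "s < x" "x \<le> hi" for x
    proof -
      have "\<bar>Y mu x - Y lam x\<bar> < e" "Y lam x \<le> - m3" "e \<le> m3"
        using \<delta>[OF mu, of x] m3 that ps by (auto simp: e_def)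
      then show ?thesis
        by linarith
    qed
    ultimately show ?thesis
      unfolding crossing_profile_def using ps by blast
  qed
  then show ?thesis
    using \<open>\<delta> > 0\<close> by blast
qed

text \<open>At a limit of parameters with two sign changes, \<open>Y lam\<close> must reach \<open>hi\<close> exactly as a zero
  from below: otherwise its profile, and with it the absence of a second sign change, would persist
  for all nearby parameters.\<close>

lemma defect_pos_if_limit_of_twice:
  assumes np: "\<not> Y_positive lam" and nt: "\<not> Y_changes_sign_twice lam"
    and near: "\<And>\<delta>. \<delta> > 0 \<Longrightarrow> \<exists>mu. Y_changes_sign_twice mu \<and> \<bar>mu - lam\<bar> < \<delta>"
  shows "defect lam > 0"
proof -
  obtain z where z: "lo < z" "z \<le> hi" "Y lam z = 0" "Y' lam z < 0"
    and before: "\<And>x. lo \<le> x \<Longrightarrow> x < z \<Longrightarrow> Y lam x > 0"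
    and after: "\<And>x. z < x \<Longrightarrow> x \<le> hi \<Longrightarrow> Y lam x \<le> 0"
    and after': "\<And>x. z < x \<Longrightarrow> x < hi \<Longrightarrow> Y lam x < 0"
    using Y_single_sign_change[OF np nt] by blast
  have zero_at_hi: "z < hi \<and> Y lam hi = 0"
  proof (rule ccontr)
    assume not_zero: "\<not> (z < hi \<and> Y lam hi = 0)"
    have "isCont (Y' lam) z"
      by (rule DERIV_isCont[OF Y'_has_derivative])
    then obtain \<eta> where "\<eta> > 0" and \<eta>: "\<And>x. x \<noteq> z \<and> \<bar>z - x\<bar> < \<eta> \<Longrightarrow> Y' lam x < 0"
      using LIM_fun_less_zero z(4) unfolding isCont_def by blast
    define p where "p = max lo (z - \<eta> / 2)"
    define s where "s = min hi (z + \<eta> / 2)"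
    have ps: "lo \<le> p" "p \<le> s" "s \<le> hi" "p < z" "z \<le> s"
      using z \<open>\<eta> > 0\<close> by (auto simp: p_def s_def)
    have pos: "\<forall>x. lo \<le> x \<and> x \<le> p \<longrightarrow> Y lam x > 0"
      using before ps by auto
    have dec: "\<forall>x. p \<le> x \<and> x \<le> s \<longrightarrow> Y' lam x < 0"
      using \<eta> z(4) \<open>\<eta> > 0\<close> by (force simp: p_def s_def abs_less_iff)
    have neg: "s = hi \<or> (\<forall>x. s \<le> x \<and> x \<le> hi \<longrightarrow> Y lam x < 0)"
    proof (cases "z = hi")
      case False
      then have "z < hi"
        using z(2) by simp
      then have "Y lam hi < 0"
        using not_zero after[of hi] by force
      moreover have "z < s"
        using \<open>z < hi\<close> \<open>\<eta> > 0\<close> by (simp add: s_def)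
      ultimately have "Y lam x < 0" if "s \<le> x" "x \<le> hi" for x
        using after' that by (cases "x = hi") auto
      then show ?thesis
        by blast
    qed (use ps in simp)
    obtain \<delta> where "\<delta> > 0" and \<delta>: "\<And>mu. \<bar>mu - lam\<bar> < \<delta> \<Longrightarrow> crossing_profile mu p s"
      using crossing_profile_stable[OF ps(1-3) pos dec neg] by blast
    obtain mu where "Y_changes_sign_twice mu" "\<bar>mu - lam\<bar> < \<delta>"
      using near[OF \<open>\<delta> > 0\<close>] by blast
    then show False
      using \<delta> crossing_profile_not_twice by blast
  qed
  have "- Y' lam hi \<le> 0"
    using zero_at_hi after'
    by (intro DERIV_nonpos_if_ge_on_left[OF DERIV_minus[OF Y_has_derivative], of z]) (auto intro: less_imp_le)
  moreover have "Y' lam hi \<noteq> 0"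
    using Y'_nonzero_at_zero hi_in_I zero_at_hi by blast
  ultimately show ?thesis
    using zero_at_hi by (simp add: defect_def)
qed

lemma infimum_of_twice:
  assumes "Y_changes_sign_twice lam"
  defines "l0 \<equiv> Inf {mu. Y_changes_sign_twice mu}"
  shows "l0 \<le> lam" "\<not> Y_changes_sign_twice l0" "\<not> Y_positive l0"
    and "\<And>\<delta>. \<delta> > 0 \<Longrightarrow> \<exists>mu. Y_changes_sign_twice mu \<and> \<bar>mu - l0\<bar> < \<delta>"
proof -
  define T where "T = {mu. Y_changes_sign_twice mu}"
  obtain p where "Y_positive p"
    using exists_Y_positive_defect_pos by blast
  then have "p \<le> mu" if "mu \<in> T" for mu
    using that Y_changes_sign_twice_not_positive Y_positive_antimono[of mu p]
    by (force simp: T_def not_le)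
  then have "bdd_below T"
    by (rule bdd_belowI)
  have "T \<noteq> {}"
    using assms(1) by (auto simp: T_def)
  show "l0 \<le> lam"
    unfolding l0_def T_def[symmetric] using assms(1) \<open>bdd_below T\<close> by (intro cInf_lower) (auto simp: T_def)
  show near: "\<exists>mu. Y_changes_sign_twice mu \<and> \<bar>mu - l0\<bar> < \<delta>" if \<delta>: "\<delta> > 0" for \<delta>
  proof -
    obtain mu where "mu \<in> T" "mu < l0 + \<delta>"
      using cInf_less_iff[OF \<open>T \<noteq> {}\<close> \<open>bdd_below T\<close>, of "l0 + \<delta>"] \<delta> by (auto simp: l0_def T_def)
    moreover have "l0 \<le> mu"
      unfolding l0_def T_def[symmetric] using \<open>mu \<in> T\<close> \<open>bdd_below T\<close> by (rule cInf_lower)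
    ultimately show ?thesis
      by (auto simp: T_def)
  qed
  show "\<not> Y_changes_sign_twice l0"
  proof
    assume "Y_changes_sign_twice l0"
    then obtain \<delta> where "\<delta> > 0" "\<And>mu. \<bar>mu - l0\<bar> < \<delta> \<Longrightarrow> Y_changes_sign_twice mu"
      using Y_changes_sign_twice_open by blast
    then have "l0 - \<delta> / 2 \<in> T"
      by (simp add: T_def)
    then have "l0 \<le> l0 - \<delta> / 2"
      unfolding l0_def T_def[symmetric] using \<open>bdd_below T\<close> by (rule cInf_lower)
    then show False
      using \<open>\<delta> > 0\<close> by simp
  qed
  show "\<not> Y_positive l0"
  proof
    assume "Y_positive l0"
    then obtain \<delta> where "\<delta> > 0" "\<And>mu. \<bar>mu - l0\<bar> < \<delta> \<Longrightarrow> Y_positive mu"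
      using Y_positive_open by blast
    then show False
      using near Y_changes_sign_twice_not_positive by blast
  qed
qed

lemma eigenvalue_above_lam_star:
  assumes bdd: "bdd_above {lam. Y_positive lam}"
    and twice: "Y_changes_sign_twice lam" and "defect lam = 0"
  shows "\<exists>mu. lam_star < mu \<and> mu < lam \<and> defect mu = 0"
proof -
  define l0 where "l0 = Inf {mu. Y_changes_sign_twice mu}"
  note l0 = infimum_of_twice[OF twice, folded l0_def]
  have "defect l0 > 0"
    using l0 by (intro defect_pos_if_limit_of_twice) auto
  have "lam_star < l0"
    using l0(3) \<open>defect l0 > 0\<close> defect_lam_star_neg[OF bdd] Y_positive_iff_less_lam_star[OF bdd]
    by (cases "lam_star = l0") auto
  moreover have "l0 < lam"
    using l0(1) \<open>defect l0 > 0\<close> \<open>defect lam = 0\<close> by (cases "l0 = lam") auto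
  moreover obtain mu where "lam_star \<le> mu" "mu \<le> l0" "defect mu = 0"
    using IVT[of defect lam_star 0 l0] defect_lam_star_neg[OF bdd] \<open>defect l0 > 0\<close>
      \<open>lam_star < l0\<close> isCont_defect by force
  moreover have "mu \<noteq> lam_star" "mu \<noteq> l0"
    using \<open>defect mu = 0\<close> defect_lam_star_neg[OF bdd] \<open>defect l0 > 0\<close> by auto
  ultimately show ?thesis
    by (intro exI[of _ mu]) auto
qed

section \<open>The first two eigenfunctions\<close>

lemma Y_positive_eigenvalue_unique:
  assumes "Y_positive lam" "Y_positive mu" "defect lam = 0" "defect mu = 0"
  shows "lam = mu"
proof -
  have False if "l < m" "Y_positive l" "Y_positive m" "defect l = 0" "defect m = 0" for l m
  proof -
    have "wronskian m l lo < wronskian m l hi"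
      using that lo_less_hi by (intro wronskian_less) (auto simp: Y_positive_def)
    then show False
      using that by (simp add: wronskian_lo wronskian_hi)
  qed
  then show ?thesis
    using assms by (metis linorder_neqE)
qed

lemma least_eigenvalue_Y_positive:
  assumes "defect lam = 0" and least: "\<And>mu. defect mu = 0 \<Longrightarrow> lam \<le> mu"
  shows "Y_positive lam"
proof (rule ccontr)
  assume "\<not> Y_positive lam"
  then have bdd: "bdd_above {lam. Y_positive lam}"
    by (rule bdd_above_Y_positive)
  then obtain mu where "mu < lam_star" "defect mu = 0"
    using eigenvalue_below_lam_star by blast
  then have "Y_positive mu" "lam \<le> mu"
    using Y_positive_iff_less_lam_star[OF bdd] least by auto
  then have "Y_positive lam"
    using Y_positive_antimono[of lam mu] by (cases "lam = mu") auto
  then show False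
    using \<open>\<not> Y_positive lam\<close> by blast
qed

definition Y_crosses_once :: "real \<Rightarrow> real \<Rightarrow> bool" where
  "Y_crosses_once lam z \<longleftrightarrow> lo < z \<and> z < hi \<and> Y lam z = 0 \<and>
     (\<forall>x. lo \<le> x \<and> x < z \<longrightarrow> Y lam x > 0) \<and> (\<forall>x. z < x \<and> x \<le> hi \<longrightarrow> Y lam x < 0)"

lemma second_eigenvalue_crosses_once:
  assumes "defect lam1 = 0" "Y_positive lam1" "lam1 < lam2" "defect lam2 = 0"
    and below: "\<And>mu. defect mu = 0 \<Longrightarrow> mu < lam2 \<Longrightarrow> mu = lam1"
  shows "\<exists>z. Y_crosses_once lam2 z"
proof -
  have np: "\<not> Y_positive lam2"
  proof
    assume "Y_positive lam2"
    then have "lam1 = lam2"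
      using Y_positive_eigenvalue_unique assms(1,2,4) by blast
    then show False
      using assms(3) by simp
  qed
  then have bdd: "bdd_above {lam. Y_positive lam}"
    by (rule bdd_above_Y_positive)
  have nt: "\<not> Y_changes_sign_twice lam2"
  proof
    assume "Y_changes_sign_twice lam2"
    then obtain mu where "lam_star < mu" "mu < lam2" "defect mu = 0"
      using eigenvalue_above_lam_star[OF bdd] assms(4) by blast
    moreover have "lam1 < lam_star"
      using Y_positive_iff_less_lam_star[OF bdd] assms(2) by blast
    ultimately show False
      using below[of mu] by simp
  qed
  obtain z where z: "lo < z" "z \<le> hi" "Y lam2 z = 0" "Y' lam2 z < 0"
    and before: "\<And>x. lo \<le> x \<Longrightarrow> x < z \<Longrightarrow> Y lam2 x > 0"
    and after: "\<And>x. z < x \<Longrightarrow> x \<le> hi \<Longrightarrow> Y lam2 x \<le> 0"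
    and after': "\<And>x. z < x \<Longrightarrow> x < hi \<Longrightarrow> Y lam2 x < 0"
    using Y_single_sign_change[OF np nt] by blast
  have hi_nonzero: "Y lam2 hi \<noteq> 0"
    using Y'_nonzero_at_zero[OF hi_in_I] assms(4) by (force simp: defect_def)
  then have "z < hi"
    using z(2,3) by (cases "z = hi") auto
  moreover have "Y lam2 x < 0" if "z < x" "x \<le> hi" for x
    using after after' hi_nonzero that by (cases "x = hi") force+
  ultimately show ?thesis
    unfolding Y_crosses_once_def using z before by blast
qed

lemma wronskian_neg_if_crosses_once:
  assumes "lam1 < lam2" "Y_positive lam1" "defect lam1 = 0" "defect lam2 = 0" "Y_crosses_once lam2 z"
    and x: "lo < x" "x < hi"
  shows "wronskian lam1 lam2 x < 0"
proof -
  have Y1: "Y lam1 t > 0" if "t \<in> I" for t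
    using assms(2) that by (simp add: Y_positive_def)
  have z: "lo < z" "z < hi" and before: "\<And>t. lo \<le> t \<Longrightarrow> t < z \<Longrightarrow> Y lam2 t > 0"
    and after: "\<And>t. z < t \<Longrightarrow> t \<le> hi \<Longrightarrow> Y lam2 t < 0"
    using assms(5) by (auto simp: Y_crosses_once_def)
  show ?thesis
  proof (cases "x \<le> z")
    case True
    have "wronskian lam2 lam1 lo < wronskian lam2 lam1 x"
    proof (rule wronskian_less)
      fix t assume "lo < t" "t < x"
      then have "Y lam2 t > 0" "Y lam1 t > 0"
        using before Y1 True x by auto
      then show "(lam2 - lam1) * Y lam2 t * Y lam1 t > 0"
        using assms(1) by simp
    qed (use x in auto)
    then show ?thesis
      by (simp add: wronskian_lo wronskian_swap[of lam2])
  next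
    case False
    have "wronskian lam1 lam2 x < wronskian lam1 lam2 hi"
    proof (rule wronskian_less)
      fix t assume "x < t" "t < hi"
      then have "Y lam1 t > 0" "Y lam2 t < 0"
        using after Y1 False x by auto
      then show "(lam1 - lam2) * Y lam1 t * Y lam2 t > 0"
        using assms(1) by (simp add: mult_neg_neg mult_neg_pos)
    qed (use x in auto)
    then show ?thesis
      by (simp add: wronskian_hi assms(3,4))
  qed
qed

lemma Y_ratio_antimono:
  assumes "lam1 < lam2" "Y_positive lam1" "defect lam1 = 0" "defect lam2 = 0" "Y_crosses_once lam2 z"
  shows "antimono_on I (\<lambda>x. Y lam2 x / Y lam1 x)"
proof -
  have Y1: "Y lam1 x > 0" if "x \<in> I" for x
    using assms(2) that by (simp add: Y_positive_def)
  have "\<forall>x\<in>I. ((\<lambda>x. - (Y lam2 x / Y lam1 x)) has_real_derivative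
      - (wronskian lam1 lam2 x / (Y lam1 x * Y lam1 x))) (at x within I)"
  proof
    fix x assume "x \<in> I"
    have "((\<lambda>x. Y lam2 x / Y lam1 x) has_real_derivative
        (Y' lam2 x * Y lam1 x - Y lam2 x * Y' lam1 x) / (Y lam1 x * Y lam1 x)) (at x within I)"
      using Y1[OF \<open>x \<in> I\<close>] by (intro DERIV_divide Y_has_derivative) auto
    then show "((\<lambda>x. - (Y lam2 x / Y lam1 x)) has_real_derivative
        - (wronskian lam1 lam2 x / (Y lam1 x * Y lam1 x))) (at x within I)"
      by (intro DERIV_minus) (simp add: wronskian_def algebra_simps)
  qed
  then have "- (Y lam2 x / Y lam1 x) \<le> - (Y lam2 y / Y lam1 y)" if "x \<in> I" "y \<in> I" "x \<le> y" for x y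
    using that wronskian_neg_if_crosses_once[OF assms] Y1
    by (intro DERIV_within_Icc_nonneg_imp_le[of lo hi "\<lambda>x. - (Y lam2 x / Y lam1 x)"])
      (auto intro!: divide_neg_pos less_imp_le simp: zero_less_mult_iff)
  then show ?thesis
    by (intro monotone_onI) auto
qed

lemma endpoint_squares_increase:
  assumes "lam1 < lam2" and Y1_pos: "Y_positive lam1" and "defect lam1 = 0" "defect lam2 = 0"
    and crosses: "Y_crosses_once lam2 z"
    and u1: "\<And>x. x \<in> I \<Longrightarrow> u1 x = c1 * Y lam1 x" and u2: "\<And>x. x \<in> I \<Longrightarrow> u2 x = c2 * Y lam2 x"
    and "c1 \<noteq> 0"
    and norm: "integral I (\<lambda>x. (u1 x)\<^sup>2) = 1" "integral I (\<lambda>x. (u2 x)\<^sup>2) = 1"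
    and moment: "integral I (\<lambda>x. x * ((u2 x)\<^sup>2 - (u1 x)\<^sup>2)) = 0"
  shows "(u2 lo)\<^sup>2 > (u1 lo)\<^sup>2 \<and> (u2 hi)\<^sup>2 > (u1 hi)\<^sup>2"
proof -
  define \<rho> where "\<rho> x = Y lam2 x / Y lam1 x" for x
  define \<phi> where "\<phi> x = c2\<^sup>2 * (\<rho> x)\<^sup>2 - c1\<^sup>2" for x
  have z: "lo < z" "z < hi" "Y lam2 z = 0"
    using crosses by (auto simp: Y_crosses_once_def)
  have Y1: "Y lam1 x > 0" if "x \<in> I" for x
    using Y1_pos that by (simp add: Y_positive_def)
  have factor: "(u2 x)\<^sup>2 - (u1 x)\<^sup>2 = (Y lam1 x)\<^sup>2 * \<phi> x" if "x \<in> I" for x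
  proof -
    have "u1 x = c1 * Y lam1 x" "u2 x = c2 * Y lam2 x"
      using that by (simp_all add: u1 u2)
    then show ?thesis
      using Y1[OF that] by (simp add: \<phi>_def \<rho>_def field_simps)
  qed
  have "antimono_on I \<rho>"
    unfolding \<rho>_def using assms(1-4) crosses by (rule Y_ratio_antimono)
  moreover have "\<rho> z = 0"
    using z by (simp add: \<rho>_def)
  ultimately have sq_dec: "antimono_on {lo..z} (\<lambda>x. (\<rho> x)\<^sup>2)" and sq_inc: "mono_on {z..hi} (\<lambda>x. (\<rho> x)\<^sup>2)"
    using square_of_antimono_through_zero[of lo hi \<rho> z] z by auto
  have dec: "antimono_on {lo..z} \<phi>"
  proof (rule monotone_onI)
    fix x y assume "x \<in> {lo..z}" "y \<in> {lo..z}" "x \<le> y"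
    then show "\<phi> y \<le> \<phi> x"
      using monotone_onD[OF sq_dec, of x y] by (simp add: \<phi>_def mult_left_mono)
  qed
  have inc: "mono_on {z..hi} \<phi>"
  proof (rule monotone_onI)
    fix x y assume "x \<in> {z..hi}" "y \<in> {z..hi}" "x \<le> y"
    then show "\<phi> x \<le> \<phi> y"
      using monotone_onD[OF sq_inc, of x y] by (simp add: \<phi>_def mult_left_mono)
  qed
  have cont_u1: "continuous_on I u1"
    by (rule continuous_on_eq[of _ "\<lambda>x. c1 * Y lam1 x"]) (auto intro!: continuous_intros continuous_on_Y simp: u1)
  have cont_u2: "continuous_on I u2"
    by (rule continuous_on_eq[of _ "\<lambda>x. c2 * Y lam2 x"]) (auto intro!: continuous_intros continuous_on_Y simp: u2)
  have "integral I (\<lambda>x. (u2 x)\<^sup>2 - (u1 x)\<^sup>2) = integral I (\<lambda>x. (u2 x)\<^sup>2) - integral I (\<lambda>x. (u1 x)\<^sup>2)"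
    by (intro integral_diff integrable_continuous_interval continuous_intros cont_u1 cont_u2)
  then have "integral I (\<lambda>x. (u2 x)\<^sup>2 - (u1 x)\<^sup>2) = 0"
    using norm by simp
  moreover have "continuous_on I (\<lambda>x. (u2 x)\<^sup>2 - (u1 x)\<^sup>2)"
    by (intro continuous_intros cont_u1 cont_u2)
  moreover have "continuous_on I \<phi>"
    unfolding \<phi>_def \<rho>_def using Y1 by (intro continuous_intros continuous_on_Y) force
  moreover have "\<phi> z < 0"
    using z \<open>c1 \<noteq> 0\<close> by (simp add: \<phi>_def \<rho>_def)
  moreover have "(Y lam1 x)\<^sup>2 > 0" if "x \<in> I" for x
    using Y1[OF that] by simp
  ultimately have "\<phi> lo > 0 \<and> \<phi> hi > 0"
    using z(1,2) moment factor dec inc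
    by (intro vanishing_moments_positive_ends[where l = lo and h = hi and z = z and \<phi> = \<phi>
          and D = "\<lambda>x. (u2 x)\<^sup>2 - (u1 x)\<^sup>2" and w = "\<lambda>x. (Y lam1 x)\<^sup>2"]) auto
  then have "(u2 lo)\<^sup>2 - (u1 lo)\<^sup>2 > 0" "(u2 hi)\<^sup>2 - (u1 hi)\<^sup>2 > 0"
    using factor[OF lo_in_I] factor[OF hi_in_I] Y1[OF lo_in_I] Y1[OF hi_in_I] by simp_all
  then show ?thesis
    by simp
qed

end

theorem lemma7p1:
  fixes L a \<alpha> \<beta> :: real and u1 u2 :: "real \<Rightarrow> real"
  assumes "L > 0"
    and "first_eigenfunction L a \<alpha> \<beta> u1" and "L2_normalized L u1"
    and "second_eigenfunction L a \<alpha> \<beta> u2" and "L2_normalized L u2"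
    and "integral {-L/2..L/2} (\<lambda>x. x * ((u2 x)\<^sup>2 - (u1 x)\<^sup>2)) = 0"
  shows "(u2 (-L/2))\<^sup>2 > (u1 (-L/2))\<^sup>2 \<and> (u2 (L/2))\<^sup>2 > (u1 (L/2))\<^sup>2"
proof -
  interpret robin_problem L a \<alpha> \<beta>
    using assms(1) by unfold_locales
  obtain lam1 where ep1: "robin_eigenpair L a \<alpha> \<beta> lam1 u1"
    and least: "\<And>mu. defect mu = 0 \<Longrightarrow> lam1 \<le> mu"
    using assms(2) by (auto simp: first_eigenfunction_def robin_eigenvalue_iff_defect)
  obtain lam2 where ep2: "robin_eigenpair L a \<alpha> \<beta> lam2 u2"
    and "\<exists>mu. defect mu = 0 \<and> mu < lam2"
    and unique: "\<And>mu nu. defect mu = 0 \<Longrightarrow> mu < lam2 \<Longrightarrow> defect nu = 0 \<Longrightarrow> nu < lam2 \<Longrightarrow> mu = nu"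
    using assms(4) by (auto simp: second_eigenfunction_def robin_eigenvalue_iff_defect)
  obtain c1 where "c1 \<noteq> 0" and u1: "\<And>x. x \<in> I \<Longrightarrow> u1 x = c1 * Y lam1 x" and "defect lam1 = 0"
    using eigenpair_eq_multiple_of_Y[OF ep1] by blast
  obtain c2 where u2: "\<And>x. x \<in> I \<Longrightarrow> u2 x = c2 * Y lam2 x" and "defect lam2 = 0"
    using eigenpair_eq_multiple_of_Y[OF ep2] by blast
  have "lam1 < lam2"
    using \<open>\<exists>mu. defect mu = 0 \<and> mu < lam2\<close> least by force
  have "Y_positive lam1"
    by (rule least_eigenvalue_Y_positive[OF \<open>defect lam1 = 0\<close> least])
  have below: "\<And>mu. defect mu = 0 \<Longrightarrow> mu < lam2 \<Longrightarrow> mu = lam1"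
    using unique \<open>defect lam1 = 0\<close> \<open>lam1 < lam2\<close> by blast
  obtain z where z: "Y_crosses_once lam2 z"
    using second_eigenvalue_crosses_once[OF \<open>defect lam1 = 0\<close> \<open>Y_positive lam1\<close> \<open>lam1 < lam2\<close>
        \<open>defect lam2 = 0\<close> below] by blast
  have "(u2 lo)\<^sup>2 > (u1 lo)\<^sup>2 \<and> (u2 hi)\<^sup>2 > (u1 hi)\<^sup>2"
    by (rule endpoint_squares_increase[OF \<open>lam1 < lam2\<close> \<open>Y_positive lam1\<close> \<open>defect lam1 = 0\<close>
          \<open>defect lam2 = 0\<close> z u1 u2 \<open>c1 \<noteq> 0\<close>])
      (use assms(3,5,6) in \<open>simp_all add: L2_normalized_def lo_def hi_def\<close>)
  then show ?thesis
    by (simp add: lo_def hi_def)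
qed

end
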